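(* Let $q=p^m$ with $p$ odd, $G=\mathrm{SL}_2(q)$, and let $V$ be a natural module for $G$ regarded over $\mathbb{F}_p$. Set $H=\mathrm{GL}(V)\cong\mathrm{GL}_{2m}(p)$ and identify $G$ with its image in $H$. Let $S\in\mathrm{Syl}_p(G)$. If $L\le H$ with $L\cong\mathrm{SL}_2(q)$ and $N_G(S)<L$, then $L=G$.
   Context: A natural module for $\mathrm{SL}_2(q)$ over $\mathbb{F}_p$ is the $2$-dimensional $\mathbb{F}_q$-space $\mathbb{F}_q^2$ with the natural matrix action of $\mathrm{SL}_2(q)$, regarded as a $2m$-dimensional $\mathbb{F}_p$-space. *)

theory Defs
  imports "HOL-Algebra.Group" "HOL-Computational_Algebra.Primes"
begin

text \<open>The finite field F_q is a finite field type 'a with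
  card 'a = q = p^m (so its characteristic is p and its prime field is the image of
  of_nat). The natural module V = F_q^2 is the type 'a \<times> 'a.\<close>

definition vadd :: "'a::field \<times> 'a \<Rightarrow> 'a \<times> 'a \<Rightarrow> 'a \<times> 'a" where
  "vadd u v = (fst u + fst v, snd u + snd v)"

definition smul :: "'a::field \<Rightarrow> 'a \<times> 'a \<Rightarrow> 'a \<times> 'a" where
  "smul c v = (c * fst v, c * snd v)"

text \<open>Linearity over the prime field F_p = {of_nat k}.\<close>
definition fp_linear :: "('a::field \<times> 'a \<Rightarrow> 'a \<times> 'a) \<Rightarrow> bool" where
  "fp_linear f \<longleftrightarrow> (\<forall>u v. f (vadd u v) = vadd (f u) (f v))
     \<and> (\<forall>(k::nat) v. f (smul (of_nat k) v) = smul (of_nat k) (f v))"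

definition GLV :: "('a::field \<times> 'a \<Rightarrow> 'a \<times> 'a) monoid" where
  "GLV = \<lparr>carrier = {f. bij f \<and> fp_linear f}, monoid.mult = (\<circ>), one = id\<rparr>"

text \<open>SL_2(q) as an abstract group of 2x2 matrices (a,b,c,d) = [[a,b],[c,d]].\<close>
definition SL2 :: "('a::field \<times> 'a \<times> 'a \<times> 'a) monoid" where
  "SL2 = \<lparr>carrier = {(a,b,c,d). a * d - b * c = 1},
          monoid.mult = (\<lambda>(a,b,c,d) (e,f,g,h).
             (a*e + b*g, a*f + b*h, c*e + d*g, c*f + d*h)),
          one = (1,0,0,1)\<rparr>"

definition nat_map :: "'a::field \<times> 'a \<times> 'a \<times> 'a \<Rightarrow> ('a \<times> 'a \<Rightarrow> 'a \<times> 'a)" where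
  "nat_map A = (case A of (a,b,c,d) \<Rightarrow> (\<lambda>(x,y). (a*x + b*y, c*x + d*y)))"

definition natG :: "('a::field \<times> 'a \<Rightarrow> 'a \<times> 'a) set" where
  "natG = nat_map ` carrier SL2"

definition is_sylow :: "nat \<Rightarrow> ('a::field \<times> 'a \<Rightarrow> 'a \<times> 'a) set \<Rightarrow> ('a \<times> 'a \<Rightarrow> 'a \<times> 'a) set \<Rightarrow> bool" where
  "is_sylow p K S \<longleftrightarrow> S \<subseteq> K \<and> subgroup S GLV \<and> (\<exists>a. card S = p ^ a)
     \<and> \<not> p dvd (card K div card S)"

definition normalizer_in :: "('a::field \<times> 'a \<Rightarrow> 'a \<times> 'a) set \<Rightarrow> ('a \<times> 'a \<Rightarrow> 'a \<times> 'a) set \<Rightarrow> ('a \<times> 'a \<Rightarrow> 'a \<times> 'a) set" where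
  "normalizer_in K S = {g \<in> K. (\<lambda>s. g \<otimes>\<^bsub>GLV\<^esub> s \<otimes>\<^bsub>GLV\<^esub> inv\<^bsub>GLV\<^esub> g) ` S = S}"

end

(*
  Let psi be an injective homomorphism from SL2(q) onto L. A Sylow p-subgroup of G is conjugate
  to the upper unitriangular group U, because a p-subgroup of SL2(q) fixes a nonzero vector
  (p does not divide q^2 - 1); its normalizer in G contains the corresponding conjugate of the
  upper triangular Borel subgroup B. After conjugating in GL(V), L contains B.

  For q = 3 the field is prime, so every element of GL(V) is a matrix, and det o psi is a
  homomorphism from SL2(3) to {1, -1}. It is trivial on the unitriangular matrices, which are
  squares and generate SL2(3); hence L is contained in G.

  For q > 3 we precompose psi with inner automorphisms of SL2(q), first to get psi(U) = U (the
  preimage of U is a Sylow subgroup of SL2(q)), then to get psi(T) = T for the diagonal torus T: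
  the preimage of diag(a0, 1/a0) with a0^2 <> 1 is upper triangular and can be diagonalized
  inside U. The image of the Weyl element w then inverts the action of T, so each coordinate of
  psi(w) on an axis is an additive map alpha with alpha(t x) = alpha(x) / t; this forces alpha = 0
  as soon as some a satisfies a (a + 1) (a^2 + a + 1) <> 0. With psi(w) antidiagonal, the
  factorization of w into unitriangular matrices determines psi on the lower unitriangular
  group. So L contains both unitriangular groups of G, which generate G, and |L| = |G|.
*)

theory Submission
  imports Defs "HOL-Number_Theory.Residues" "HOL-Algebra.Group_Action"
begin

lemma (in group_hom) subgroup_vimage:
  assumes "subgroup K H"
  shows "subgroup (carrier G \<inter> h -` K) G"
proof (rule G.subgroupI)
  show "carrier G \<inter> h -` K \<noteq> {}" using subgroup.one_closed[OF assms] by auto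
next
  fix x assume "x \<in> carrier G \<inter> h -` K"
  then show "inv x \<in> carrier G \<inter> h -` K" by (simp add: subgroup.m_inv_closed[OF assms])
next
  fix x y assume "x \<in> carrier G \<inter> h -` K" "y \<in> carrier G \<inter> h -` K"
  then show "x \<otimes> y \<in> carrier G \<inter> h -` K" by (simp add: subgroup.m_closed[OF assms])
qed auto

lemma (in group) subgroup_iso_imp_embedding:
  assumes "subgroup L G" and "G\<lparr>carrier := L\<rparr> \<cong> H" and "group H"
  obtains \<psi> where "\<psi> \<in> hom H G" "inj_on \<psi> (carrier H)" "\<psi> ` carrier H = L"
proof -
  obtain \<phi> where \<phi>: "\<phi> \<in> iso (G\<lparr>carrier := L\<rparr>) H" using assms(2) unfolding is_iso_def by blast
  have "group (G\<lparr>carrier := L\<rparr>)" using subgroup.subgroup_is_group[OF assms(1) is_group] .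
  then have iso: "inv_into L \<phi> \<in> iso H (G\<lparr>carrier := L\<rparr>)"
    using group.iso_set_sym[OF _ \<phi>] by simp
  then have bij: "bij_betw (inv_into L \<phi>) (carrier H) L" by (simp add: iso_def)
  have "inv_into L \<phi> \<in> hom H G"
    using iso subgroup.subset[OF assms(1)] by (auto simp: iso_def hom_def)
  then show ?thesis using that bij by (simp add: bij_betw_def)
qed

lemma (in group_action) p_group_fixed_point:
  assumes "finite E" and "prime p" and "order G = p ^ a" and "\<not> p dvd card E"
  shows "\<exists>x\<in>E. \<forall>g\<in>carrier G. \<phi> g x = x"
proof (rule ccontr)
  assume no_fixed_point: "\<not> ?thesis"
  have "p dvd card Orb" if Orb: "Orb \<in> orbits G E \<phi>" for Orb
  proof -
    obtain x where x: "x \<in> E" and Orb_eq: "Orb = orbit G \<phi> x" using Orb unfolding orbits_def by blast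
    have "card Orb * card (stabilizer G \<phi> x) = p ^ a"
      using orbit_stabilizer_theorem[OF x] Orb_eq assms(3) by simp
    then obtain i where i: "card Orb = p ^ i" using divides_primepow_nat[OF assms(2)] by (metis dvd_triv_left)
    have "card Orb \<noteq> 1"
    proof
      assume "card Orb = 1"
      moreover have "x \<in> Orb" using Orb_eq orbit_refl[OF x] by simp
      ultimately have "Orb = {x}" by (metis card_1_singletonE singletonD)
      then have "\<forall>g\<in>carrier G. \<phi> g x = x" using Orb_eq by (auto simp: orbit_def)
      then show False using no_fixed_point x by blast
    qed
    then show ?thesis using i by (cases i) auto
  qed
  then have "p dvd (\<Sum>Orb\<in>orbits G E \<phi>. card Orb)" by (simp add: dvd_sum)
  also have "(\<Sum>Orb\<in>orbits G E \<phi>. card Orb) = card E"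
    using disjoint_sum[OF assms(1), of "\<lambda>_. 1::nat"] by simp
  finally show False using assms(4) by contradiction
qed

lemma odd_prime_power_ge_5:
  fixes p m :: nat
  assumes "prime p" and "odd p" and "m \<ge> 1" and "p ^ m \<noteq> 3"
  shows "p ^ m \<ge> 5"
proof -
  have "p \<ge> 3" using prime_ge_2_nat[OF assms(1)] assms(2) by (cases "p = 2") auto
  moreover have "p \<le> p ^ m" using \<open>p \<ge> 3\<close> assms(3) by (simp add: self_le_power)
  ultimately have "p ^ m \<ge> 3" by linarith
  moreover have "odd (p ^ m)" using assms(2) by simp
  ultimately show ?thesis using assms(4) by presburger
qed

lemma card3_field:
  assumes "card (UNIV :: 'a::{finite,field} set) = 3"
  shows "(3::'a) = 0" and "UNIV = {0, 1, 2::'a}"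
proof -
  have dvd: "CHAR('a) dvd 3" using CHAR_dvd_CARD[where 'a='a] assms by simp
  then have "CHAR('a) \<le> 3" by (rule dvd_imp_le) simp
  moreover have "CHAR('a) \<ge> 2"
    using prime_ge_2_nat[OF prime_CHAR_semidom[OF finite_imp_CHAR_pos[where 'a='a]]] by simp
  moreover have "CHAR('a) \<noteq> 2" using dvd by auto
  ultimately have "CHAR('a) = 3" by simp
  then show three: "(3::'a) = 0" by (metis of_nat_numeral of_nat_eq_0_iff_char_dvd dvd_refl)
  have "(2::'a) \<noteq> 0"
  proof
    assume "(2::'a) = 0"
    then have "(3::'a) = 1" by (metis add_0 numeral_plus_one semiring_norm(5))
    then show False using three by simp
  qed
  moreover have "(1::'a) \<noteq> 2"
  proof
    assume "(1::'a) = 2"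
    then have "(2::'a) - 1 = 0" by simp
    then show False by simp
  qed
  ultimately have "card {0, 1, 2::'a} = 3" by simp
  then show "UNIV = {0, 1, 2::'a}" using assms by (intro card_subset_eq[symmetric]) simp_all
qed

lemma exists_nonzero_square_ne_1:
  assumes "card (UNIV :: 'a::{finite,field} set) \<ge> 4"
  shows "\<exists>a::'a. a \<noteq> 0 \<and> a * a \<noteq> 1"
proof -
  have "\<not> UNIV \<subseteq> {0, 1, -1::'a}"
  proof
    assume "UNIV \<subseteq> {0, 1, -1::'a}"
    then have "card (UNIV :: 'a set) \<le> card {0, 1, -1::'a}" by (intro card_mono) simp_all
    also have "\<dots> \<le> 3" by (rule card_insert_le_m1) (simp_all add: card_insert_le_m1)
    finally show False using assms by simp
  qed
  then show ?thesis by (auto simp: square_eq_1_iff)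
qed

lemma exists_nonroot_of_cyclotomic_3:
  assumes "card (UNIV :: 'a::{finite,field} set) \<ge> 5"
  shows "\<exists>a::'a. a \<noteq> 0 \<and> a + 1 \<noteq> 0 \<and> a * a + a + 1 \<noteq> 0"
proof -
  obtain r :: 'a where roots: "\<And>x. x * x + x + 1 = 0 \<Longrightarrow> x = r \<or> x = - (1 + r)"
  proof (cases "\<exists>r::'a. r * r + r + 1 = 0")
    case True
    then obtain r :: 'a where r: "r * r + r + 1 = 0" by blast
    have "x * x + x + 1 = (x - r) * (x + (1 + r))" for x :: 'a
      using r by (simp add: algebra_simps)
    then show thesis using that[of r] by (metis eq_neg_iff_add_eq_0 mult_eq_0_iff right_minus_eq)
  qed auto
  have "\<not> UNIV \<subseteq> {0, -1, r, - (1 + r)}"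
  proof
    assume "UNIV \<subseteq> {0, -1, r, - (1 + r)}"
    then have "card (UNIV :: 'a set) \<le> card {0, -1, r, - (1 + r)}" by (intro card_mono) simp_all
    also have "\<dots> \<le> 4" by (simp add: card_insert_le_m1)
    finally show False using assms by simp
  qed
  then obtain x :: 'a where x: "x \<notin> {0, -1, r, - (1 + r)}" by blast
  then have "x + 1 \<noteq> 0" by (metis eq_neg_iff_add_eq_0 insertCI)
  moreover have "x * x + x + 1 \<noteq> 0" using roots x by blast
  ultimately show ?thesis using x by blast
qed

lemma additive_antihomogeneous_eq_0:
  fixes \<alpha> :: "'a::field \<Rightarrow> 'a" and a :: 'a
  assumes add: "\<And>x y. \<alpha> (x + y) = \<alpha> x + \<alpha> y"
    and antihom: "\<And>t x. t \<noteq> 0 \<Longrightarrow> \<alpha> (t * x) = inverse t * \<alpha> x"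
    and a: "a \<noteq> 0" "a + 1 \<noteq> 0" "a * a + a + 1 \<noteq> 0"
  shows "\<alpha> x = 0"
proof -
  have at: "\<alpha> t = inverse t * \<alpha> 1" if "t \<noteq> 0" for t using antihom[OF that, of 1] by simp
  have \<alpha>1: "\<alpha> 1 = 0"
  proof (rule ccontr)
    assume "\<alpha> 1 \<noteq> 0"
    moreover have "inverse (1 + a) * \<alpha> 1 = (1 + inverse a) * \<alpha> 1"
      using add[of 1 a] at[of "1 + a"] at[of a] a by (simp add: add.commute distrib_right)
    ultimately have "inverse (1 + a) = 1 + inverse a" by simp
    then have "a = a * (1 + a) + (1 + a)" using a by (simp add: field_simps add.commute)
    then show False using a(3) by (simp add: algebra_simps)
  qed
  have "\<alpha> 0 = \<alpha> 0 + \<alpha> 0" using add[of 0 0] by (subst (asm) add_0_right)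
  then have "\<alpha> 0 = 0" by (rule add_cancel_right_right[THEN iffD1])
  then show ?thesis using at \<alpha>1 by (cases "x = 0") simp_all
qed

section \<open>The group \<open>SL\<^sub>2\<close> of \<open>2 \<times> 2\<close> matrices\<close>

type_synonym 'a mat = "'a \<times> 'a \<times> 'a \<times> 'a"

abbreviation SL2_mult :: "'a::field mat \<Rightarrow> 'a mat \<Rightarrow> 'a mat" (infixl "\<cdot>" 70) where
  "A \<cdot> B \<equiv> A \<otimes>\<^bsub>SL2\<^esub> B"

definition adj_mat :: "'a::field mat \<Rightarrow> 'a mat" where
  "adj_mat A = (case A of (a,b,c,d) \<Rightarrow> (d,-b,-c,a))"

definition conj_mat :: "'a::field mat \<Rightarrow> 'a mat \<Rightarrow> 'a mat" where
  "conj_mat k A = k \<cdot> A \<cdot> adj_mat k"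

definition upper_unip :: "'a::field \<Rightarrow> 'a mat" where
  "upper_unip b = (1,b,0,1)"

definition lower_unip :: "'a::field \<Rightarrow> 'a mat" where
  "lower_unip c = (1,0,c,1)"

definition diag_mat :: "'a::field \<Rightarrow> 'a mat" where
  "diag_mat t = (t,0,0,inverse t)"

definition weyl_mat :: "'a::field \<Rightarrow> 'a mat" where
  "weyl_mat b = (0,b,-inverse b,0)"

definition unipotent :: "'a::field mat set" where
  "unipotent = range upper_unip"

definition torus :: "'a::field mat set" where
  "torus = diag_mat ` (UNIV - {0})"

definition borel :: "'a::field mat set" where
  "borel = {(a, b, 0, inverse a) | a b. a \<noteq> 0}"

lemma SL2_mult_eq [simp]:
  "((a::'a::field),b,c,d) \<cdot> (e,f,g,h) = (a*e + b*g, a*f + b*h, c*e + d*g, c*f + d*h)"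
  by (simp add: SL2_def)

lemma SL2_one [simp]: "\<one>\<^bsub>SL2\<^esub> = ((1,0,0,1) :: 'a::field mat)"
  by (simp add: SL2_def)

lemma SL2_carrier_iff [simp]: "((a::'a::field),b,c,d) \<in> carrier SL2 \<longleftrightarrow> a*d - b*c = 1"
  by (simp add: SL2_def)

lemma SL2_mult_closed: "(A::'a::field mat) \<in> carrier SL2 \<Longrightarrow> B \<in> carrier SL2 \<Longrightarrow> A \<cdot> B \<in> carrier SL2"
  by (cases A; cases B) (auto simp: algebra_simps)

lemma SL2_mult_assoc: "((A::'a::field mat) \<cdot> B) \<cdot> C = A \<cdot> (B \<cdot> C)"
  by (cases A; cases B; cases C) (simp add: algebra_simps)

lemma SL2_mult_one: "(A::'a::field mat) \<cdot> (1,0,0,1) = A" "(1,0,0,1) \<cdot> A = A"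
  by (cases A, simp)+

lemma adj_mat_closed: "(A::'a::field mat) \<in> carrier SL2 \<Longrightarrow> adj_mat A \<in> carrier SL2"
  by (cases A) (auto simp: adj_mat_def algebra_simps)

lemma adj_mat_mult_cancel:
  assumes "(A::'a::field mat) \<in> carrier SL2"
  shows "adj_mat A \<cdot> A = (1,0,0,1)" and "A \<cdot> adj_mat A = (1,0,0,1)"
  using assms by (cases A; auto simp: adj_mat_def algebra_simps)+

lemma adj_mat_adj_mat [simp]: "adj_mat (adj_mat (A::'a::field mat)) = A"
  by (cases A) (simp add: adj_mat_def)

lemma adj_mat_mult: "adj_mat ((A::'a::field mat) \<cdot> B) = adj_mat B \<cdot> adj_mat A"
  by (cases A; cases B) (simp add: adj_mat_def algebra_simps)

lemma group_SL2: "group (SL2 :: 'a::field mat monoid)"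
proof (rule groupI)
  fix A B :: "'a mat"
  assume "A \<in> carrier SL2" "B \<in> carrier SL2"
  then show "A \<cdot> B \<in> carrier SL2" by (rule SL2_mult_closed)
next
  fix A B C :: "'a mat"
  show "A \<cdot> B \<cdot> C = A \<cdot> (B \<cdot> C)" by (rule SL2_mult_assoc)
next
  fix A :: "'a mat"
  show "\<one>\<^bsub>SL2\<^esub> \<cdot> A = A" by (cases A) simp
next
  fix A :: "'a mat"
  assume "A \<in> carrier SL2"
  then show "\<exists>B\<in>carrier SL2. B \<cdot> A = \<one>\<^bsub>SL2\<^esub>"
    using adj_mat_closed adj_mat_mult_cancel(1) by (intro bexI[of _ "adj_mat A"]) simp_all
qed simp

lemma SL2_inv_eq_adj_mat: "(A::'a::field mat) \<in> carrier SL2 \<Longrightarrow> inv\<^bsub>SL2\<^esub> A = adj_mat A"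
  by (simp add: group.inv_equality[OF group_SL2] adj_mat_closed adj_mat_mult_cancel)

lemma card_SL2:
  "card (carrier (SL2 :: 'a::{finite,field} mat monoid)) = card (UNIV :: 'a set) * (card (UNIV :: 'a set) * card (UNIV :: 'a set) - 1)"
proof -
  let ?q = "card (UNIV :: 'a set)"
  define P :: "'a mat set" where "P = (\<lambda>(a,b). (a,b,0,inverse a)) ` ((UNIV - {0}) \<times> UNIV)"
  define Q :: "'a mat set" where "Q = (\<lambda>(a,c,d). (a,(a*d-1)/c,c,d)) ` (UNIV \<times> (UNIV - {0}) \<times> UNIV)"
  have SL2_eq: "carrier SL2 = P \<union> Q"
  proof (intro Set.set_eqI iffI)
    fix A :: "'a mat"
    assume A: "A \<in> carrier SL2"
    obtain a b c d where A_eq: "A = (a,b,c,d)" by (cases A)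
    show "A \<in> P \<union> Q"
    proof (cases "c = 0")
      case True
      then have "a * d = 1" using A by (simp add: A_eq)
      then have "a \<noteq> 0" "d = inverse a" by (auto dest: inverse_unique)
      then show ?thesis using True unfolding P_def A_eq by (auto intro!: image_eqI[of _ _ "(a,b)"])
    next
      case False
      then have "b = (a*d-1)/c" using A by (auto simp: A_eq field_simps)
      then show ?thesis using False unfolding Q_def A_eq by (auto intro!: image_eqI[of _ _ "(a,c,d)"])
    qed
  next
    fix A :: "'a mat"
    assume "A \<in> P \<union> Q"
    then show "A \<in> carrier SL2" unfolding P_def Q_def by (auto simp: divide_simps split: if_splits)
  qed
  have "card (carrier (SL2 :: 'a mat monoid)) = card P + card Q"
    unfolding SL2_eq by (rule card_Un_disjoint) (auto simp: P_def Q_def)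
  moreover have "card P = (?q - 1) * ?q"
    unfolding P_def by (subst card_image) (auto simp: inj_on_def card_cartesian_product card_Diff_singleton)
  moreover have "card Q = ?q * ((?q - 1) * ?q)"
    unfolding Q_def by (subst card_image) (auto simp: inj_on_def card_cartesian_product card_Diff_singleton)
  ultimately have "card (carrier (SL2 :: 'a mat monoid)) = (?q - 1) * ?q + ?q * ((?q - 1) * ?q)"
    by simp
  also have "\<dots> = ?q * (?q * ?q - 1)"
    by (cases ?q) (simp_all add: algebra_simps)
  finally show ?thesis .
qed

lemma upper_unip_closed [simp]: "upper_unip (b::'a::field) \<in> carrier SL2"
  by (simp add: upper_unip_def)

lemma lower_unip_closed [simp]: "lower_unip (c::'a::field) \<in> carrier SL2"
  by (simp add: lower_unip_def)

lemma diag_mat_closed: "(t::'a::field) \<noteq> 0 \<Longrightarrow> diag_mat t \<in> carrier SL2"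
  by (simp add: diag_mat_def)

lemma weyl_mat_closed: "(b::'a::field) \<noteq> 0 \<Longrightarrow> weyl_mat b \<in> carrier SL2"
  by (simp add: weyl_mat_def)

lemma upper_unip_mult: "upper_unip (b::'a::field) \<cdot> upper_unip c = upper_unip (b + c)"
  by (simp add: upper_unip_def)

lemma upper_unip_0: "upper_unip (0::'a::field) = (1,0,0,1)"
  by (simp add: upper_unip_def)

lemma inj_upper_unip: "inj (upper_unip :: 'a::field \<Rightarrow> 'a mat)"
  by (rule injI) (simp add: upper_unip_def)

lemma borel_subset_SL2: "borel \<subseteq> (carrier SL2 :: 'a::field mat set)"
  by (auto simp: borel_def)

lemma unipotent_subset_borel: "unipotent \<subseteq> (borel :: 'a::field mat set)"
  by (force simp: unipotent_def borel_def upper_unip_def)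

lemma torus_subset_borel: "torus \<subseteq> (borel :: 'a::field mat set)"
  by (force simp: torus_def borel_def diag_mat_def)

lemma subgroup_unipotent: "subgroup (unipotent :: 'a::field mat set) SL2"
proof (rule group.subgroupI[OF group_SL2])
  show "unipotent \<subseteq> (carrier SL2 :: 'a mat set)" by (auto simp: unipotent_def)
  show "unipotent \<noteq> ({} :: 'a mat set)" by (simp add: unipotent_def)
next
  fix A :: "'a mat"
  assume "A \<in> unipotent"
  then obtain b where "A = upper_unip b" by (auto simp: unipotent_def)
  then have "inv\<^bsub>SL2\<^esub> A = upper_unip (- b)"
    by (simp add: SL2_inv_eq_adj_mat adj_mat_def upper_unip_def)
  then show "inv\<^bsub>SL2\<^esub> A \<in> unipotent" by (simp add: unipotent_def)
next
  fix A B :: "'a mat"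
  assume "A \<in> unipotent" "B \<in> unipotent"
  then show "A \<otimes>\<^bsub>SL2\<^esub> B \<in> unipotent" by (auto simp: unipotent_def upper_unip_mult)
qed

lemma card_unipotent: "card (unipotent :: 'a::{finite,field} mat set) = card (UNIV :: 'a set)"
  unfolding unipotent_def by (rule card_image[OF inj_upper_unip])

lemma diag_mat_in_torus: "(t::'a::field) \<noteq> 0 \<Longrightarrow> diag_mat t \<in> torus"
  by (simp add: torus_def)

lemma diag_mat_mult: "diag_mat (s::'a::field) \<cdot> diag_mat t = diag_mat (s * t)"
  by (simp add: diag_mat_def)

lemma borel_if_lower_left_eq_0:
  "((a::'a::field),b,0,d) \<in> carrier SL2 \<Longrightarrow> (a,b,0,d) \<in> borel"
  by (auto simp: borel_def dest: inverse_unique)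

lemma borel_commuting_with_diag_mat:
  assumes "B \<in> (borel :: 'a::field mat set)" and "a \<noteq> 0" and "a * a \<noteq> 1"
    and "B \<cdot> diag_mat a = diag_mat a \<cdot> B"
  shows "B \<in> torus"
proof -
  obtain x y where B: "B = (x, y, 0, inverse x)" "x \<noteq> 0" using assms(1) by (auto simp: borel_def)
  then have "y * inverse a = a * y" using assms(4) by (simp add: diag_mat_def)
  then have "y * (1 - a * a) = 0" using assms(2) by (simp add: field_simps)
  then have "y = 0" using assms(3) by simp
  then show ?thesis using B by (simp add: torus_def diag_mat_def)
qed

lemma SL2_generated_by_unipotents:
  fixes M :: "'a::field mat set"
  assumes upper: "\<And>b. upper_unip b \<in> M" and lower: "\<And>c. lower_unip c \<in> M"
    and mult: "\<And>A B. A \<in> M \<Longrightarrow> B \<in> M \<Longrightarrow> A \<cdot> B \<in> M"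
  shows "carrier SL2 \<subseteq> M"
proof
  have bruhat: "(a,b,c,d) \<in> M" if "a*d - b*c = 1" "c \<noteq> 0" for a b c d :: 'a
  proof -
    have "(a,b,c,d) = upper_unip ((a-1)/c) \<cdot> lower_unip c \<cdot> upper_unip ((d-1)/c)"
      using that by (simp add: upper_unip_def lower_unip_def field_simps)
    then show ?thesis using upper lower mult by metis
  qed
  fix A :: "'a mat"
  assume A: "A \<in> carrier SL2"
  obtain a b c d where A_eq: "A = (a,b,c,d)" by (cases A)
  show "A \<in> M"
  proof (cases "c = 0")
    case False
    then show ?thesis using A bruhat by (simp add: A_eq)
  next
    case True
    then have "a \<noteq> 0" using A by (auto simp: A_eq)
    then have "lower_unip 1 \<cdot> A \<in> M"
      using A True by (simp add: A_eq lower_unip_def bruhat algebra_simps)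
    moreover have "A = lower_unip (-1) \<cdot> (lower_unip 1 \<cdot> A)"
      by (simp add: A_eq lower_unip_def)
    ultimately show ?thesis using lower mult by metis
  qed
qed

lemma conj_mat_closed:
  "(k::'a::field mat) \<in> carrier SL2 \<Longrightarrow> A \<in> carrier SL2 \<Longrightarrow> conj_mat k A \<in> carrier SL2"
  unfolding conj_mat_def by (intro SL2_mult_closed adj_mat_closed)

lemma conj_mat_conj_mat: "conj_mat (k::'a::field mat) (conj_mat h A) = conj_mat (k \<cdot> h) A"
  by (simp only: conj_mat_def adj_mat_mult SL2_mult_assoc)

lemma conj_mat_one: "conj_mat (1,0,0,1) (A::'a::field mat) = A"
  by (cases A) (simp add: conj_mat_def adj_mat_def)

lemma conj_mat_adj_mat:
  assumes "(k::'a::field mat) \<in> carrier SL2"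
  shows "conj_mat (adj_mat k) (conj_mat k A) = A" and "conj_mat k (conj_mat (adj_mat k) A) = A"
  using assms by (simp_all only: conj_mat_conj_mat adj_mat_mult_cancel conj_mat_one)

lemma conj_mat_mult:
  assumes "(k::'a::field mat) \<in> carrier SL2"
  shows "conj_mat k (A \<cdot> B) = conj_mat k A \<cdot> conj_mat k B"
proof -
  have "conj_mat k A \<cdot> conj_mat k B = k \<cdot> (A \<cdot> ((adj_mat k \<cdot> k) \<cdot> (B \<cdot> adj_mat k)))"
    by (simp only: conj_mat_def SL2_mult_assoc)
  also have "\<dots> = conj_mat k (A \<cdot> B)"
    by (simp only: adj_mat_mult_cancel(1)[OF assms] SL2_mult_one conj_mat_def SL2_mult_assoc)
  finally show ?thesis by (rule sym)
qed

lemma conj_mat_image_carrier: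
  assumes "(k::'a::field mat) \<in> carrier SL2"
  shows "conj_mat k ` carrier SL2 = carrier SL2"
proof
  show "conj_mat k ` carrier SL2 \<subseteq> carrier SL2" using conj_mat_closed[OF assms] by blast
  show "carrier SL2 \<subseteq> conj_mat k ` carrier SL2"
  proof
    fix A :: "'a mat"
    assume "A \<in> carrier SL2"
    then show "A \<in> conj_mat k ` carrier SL2"
      using conj_mat_adj_mat(2)[OF assms] conj_mat_closed[OF adj_mat_closed[OF assms]]
      by (metis image_eqI)
  qed
qed

lemma inj_conj_mat: "(k::'a::field mat) \<in> carrier SL2 \<Longrightarrow> inj (conj_mat k)"
  by (metis conj_mat_adj_mat(1) injI)

lemma conj_mat_borel_unipotent:
  assumes "B \<in> (borel :: 'a::field mat set)"
  shows "conj_mat B (upper_unip c) = upper_unip (fst B * fst B * c)"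
    and "conj_mat B ` unipotent = unipotent"
proof -
  obtain a b where B: "B = (a, b, 0, inverse a)" "a \<noteq> 0" using assms by (auto simp: borel_def)
  show conj: "conj_mat B (upper_unip c) = upper_unip (fst B * fst B * c)" for c
    using B by (simp add: conj_mat_def adj_mat_def upper_unip_def field_simps)
  show "conj_mat B ` unipotent = unipotent"
  proof
    show "conj_mat B ` unipotent \<subseteq> unipotent" by (auto simp: unipotent_def conj)
    show "unipotent \<subseteq> conj_mat B ` unipotent"
    proof
      fix U :: "'a mat"
      assume "U \<in> unipotent"
      then obtain c where "U = upper_unip c" by (auto simp: unipotent_def)
      then have "U = conj_mat B (upper_unip (c / (a * a)))" unfolding conj using B by simp
      then show "U \<in> conj_mat B ` unipotent" by (simp add: unipotent_def)
    qed
  qed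
qed

lemma conj_mat_by_conj_mat:
  assumes "(h::'a::field mat) \<in> carrier SL2"
  shows "conj_mat (conj_mat h B) (conj_mat h A) = conj_mat h (conj_mat B A)"
proof -
  have "conj_mat h B \<cdot> h = h \<cdot> B"
    by (simp only: conj_mat_def SL2_mult_assoc adj_mat_mult_cancel(1)[OF assms] SL2_mult_one(1))
  then show ?thesis by (simp only: conj_mat_conj_mat)
qed

lemma conj_upper_unip_diag_mat:
  assumes "(a::'a::field) \<noteq> 0" and "a * a \<noteq> 1"
  shows "conj_mat (upper_unip (\<beta> / (inverse a - a))) (diag_mat a) = (a, \<beta>, 0, inverse a)"
proof -
  define c where "c = \<beta> / (inverse a - a)"
  have "inverse a - a \<noteq> 0" using assms by (auto simp: field_simps)
  then have "c * (inverse a - a) = \<beta>" by (simp add: c_def)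
  then show ?thesis unfolding c_def[symmetric] using assms(1)
    by (simp add: conj_mat_def adj_mat_def upper_unip_def diag_mat_def algebra_simps)
qed

section \<open>The natural module\<close>

lemma nat_map_apply [simp]: "nat_map ((a::'a::field),b,c,d) (x,y) = (a*x + b*y, c*x + d*y)"
  by (simp add: nat_map_def)

lemma nat_map_mult: "nat_map ((A::'a::field mat) \<cdot> B) = nat_map A \<circ> nat_map B"
  by (cases A; cases B) (auto simp: fun_eq_iff algebra_simps)

lemma inj_nat_map: "inj (nat_map :: 'a::field mat \<Rightarrow> _)"
proof (rule injI)
  fix A B :: "'a mat"
  assume eq: "nat_map A = nat_map B"
  obtain a b c d e f g h where "A = (a,b,c,d)" "B = (e,f,g,h)" by (cases A; cases B)
  with fun_cong[OF eq, of "(1,0)"] fun_cong[OF eq, of "(0,1)"] show "A = B" by simp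
qed

lemma nat_map_one: "nat_map ((1,0,0,1)::'a::field mat) = id"
  by (auto simp: fun_eq_iff)

lemma nat_map_adj_mat:
  assumes "(A::'a::field mat) \<in> carrier SL2"
  shows "nat_map (adj_mat A) \<circ> nat_map A = id" and "nat_map A \<circ> nat_map (adj_mat A) = id"
  by (simp_all only: nat_map_mult[symmetric] adj_mat_mult_cancel[OF assms] nat_map_one)

lemma nat_map_adj_mat_apply:
  assumes "(A::'a::field mat) \<in> carrier SL2"
  shows "nat_map (adj_mat A) (nat_map A v) = v" and "nat_map A (nat_map (adj_mat A) v) = v"
  using fun_cong[OF nat_map_adj_mat(1)[OF assms], of v] fun_cong[OF nat_map_adj_mat(2)[OF assms], of v]
  by (simp_all only: comp_apply id_apply)

lemma nat_map_adj_mat_comp_cancel: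
  assumes "(A::'a::field mat) \<in> carrier SL2"
  shows "nat_map A \<circ> (nat_map (adj_mat A) \<circ> f) = f"
  by (simp add: comp_assoc[symmetric] nat_map_adj_mat[OF assms])

lemma fp_linear_nat_map: "fp_linear (nat_map (A::'a::field mat))"
  by (cases A) (auto simp: fp_linear_def vadd_def smul_def algebra_simps)

lemma fp_linear_comp: "fp_linear f \<Longrightarrow> fp_linear g \<Longrightarrow> fp_linear (f \<circ> g)"
  unfolding fp_linear_def comp_def by metis

lemma fp_linear_inv: "fp_linear f \<Longrightarrow> bij f \<Longrightarrow> fp_linear (Hilbert_Choice.inv f)"
  unfolding fp_linear_def by (metis bij_inv_eq_iff)

lemma GLV_mult [simp]: "f \<otimes>\<^bsub>GLV\<^esub> g = f \<circ> g"
  by (simp add: GLV_def)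

lemma GLV_one [simp]: "\<one>\<^bsub>GLV\<^esub> = id"
  by (simp add: GLV_def)

lemma GLV_carrier_iff: "f \<in> carrier GLV \<longleftrightarrow> bij f \<and> fp_linear f"
  by (simp add: GLV_def)

lemma group_GLV: "group (GLV :: ('a::field \<times> 'a \<Rightarrow> 'a \<times> 'a) monoid)"
proof (rule groupI)
  fix f g h :: "'a \<times> 'a \<Rightarrow> 'a \<times> 'a"
  show "f \<in> carrier GLV \<Longrightarrow> g \<in> carrier GLV \<Longrightarrow> f \<otimes>\<^bsub>GLV\<^esub> g \<in> carrier GLV"
    by (simp add: GLV_carrier_iff bij_comp fp_linear_comp)
  show "f \<otimes>\<^bsub>GLV\<^esub> g \<otimes>\<^bsub>GLV\<^esub> h = f \<otimes>\<^bsub>GLV\<^esub> (g \<otimes>\<^bsub>GLV\<^esub> h)"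
    by (simp add: comp_assoc)
  show "\<one>\<^bsub>GLV\<^esub> \<otimes>\<^bsub>GLV\<^esub> f = f" by simp
  show "f \<in> carrier GLV \<Longrightarrow> \<exists>g\<in>carrier GLV. g \<otimes>\<^bsub>GLV\<^esub> f = \<one>\<^bsub>GLV\<^esub>"
    by (intro bexI[of _ "Hilbert_Choice.inv f"])
       (auto simp: GLV_carrier_iff fp_linear_inv bij_imp_bij_inv bij_is_inj)
qed (simp add: GLV_carrier_iff fp_linear_def)

lemma nat_map_closed: "(A::'a::field mat) \<in> carrier SL2 \<Longrightarrow> nat_map A \<in> carrier GLV"
  unfolding GLV_carrier_iff
  by (metis fp_linear_nat_map nat_map_adj_mat o_bij)

lemma GLV_inv_nat_map:
  "(A::'a::field mat) \<in> carrier SL2 \<Longrightarrow> inv\<^bsub>GLV\<^esub> (nat_map A) = nat_map (adj_mat A)"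
  by (simp add: group.inv_equality[OF group_GLV] nat_map_adj_mat nat_map_closed adj_mat_closed)

lemma GLV_conj_nat_map:
  assumes "(k::'a::field mat) \<in> carrier SL2"
  shows "nat_map k \<otimes>\<^bsub>GLV\<^esub> nat_map A \<otimes>\<^bsub>GLV\<^esub> inv\<^bsub>GLV\<^esub> (nat_map k) = nat_map (conj_mat k A)"
  by (simp only: GLV_inv_nat_map[OF assms] GLV_mult conj_mat_def nat_map_mult)

lemma natG_conj_closed:
  assumes "h \<in> carrier SL2" "f \<in> natG"
  shows "nat_map h \<circ> f \<circ> nat_map (adj_mat h) \<in> (natG :: ('a::field \<times> 'a \<Rightarrow> 'a \<times> 'a) set)"
proof -
  obtain A where A: "A \<in> carrier SL2" "f = nat_map A" using assms(2) by (auto simp: natG_def)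
  then have "nat_map h \<circ> f \<circ> nat_map (adj_mat h) = nat_map (conj_mat h A)"
    by (simp add: conj_mat_def nat_map_mult)
  then show ?thesis unfolding natG_def using conj_mat_closed[OF assms(1) A(1)] by simp
qed

section \<open>Embeddings of \<open>SL\<^sub>2\<close> into \<open>GL(V)\<close>\<close>

definition SL2_embedding :: "('a::field mat \<Rightarrow> ('a \<times> 'a \<Rightarrow> 'a \<times> 'a)) \<Rightarrow> bool" where
  "SL2_embedding \<psi> \<longleftrightarrow> \<psi> \<in> hom SL2 GLV \<and> inj_on \<psi> (carrier SL2)"

lemma SL2_embedding_group_hom: "SL2_embedding \<psi> \<Longrightarrow> group_hom SL2 GLV \<psi>"
  unfolding SL2_embedding_def group_hom_def group_hom_axioms_def
  using group_SL2 group_GLV by blast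

lemma SL2_embedding_closed: "SL2_embedding \<psi> \<Longrightarrow> A \<in> carrier SL2 \<Longrightarrow> \<psi> A \<in> carrier GLV"
  unfolding SL2_embedding_def by (auto dest: hom_in_carrier)

lemma SL2_embedding_mult:
  "SL2_embedding \<psi> \<Longrightarrow> A \<in> carrier SL2 \<Longrightarrow> B \<in> carrier SL2 \<Longrightarrow> \<psi> (A \<cdot> B) = \<psi> A \<circ> \<psi> B"
  unfolding SL2_embedding_def by (auto dest: hom_mult)

lemma SL2_embedding_one: "SL2_embedding \<psi> \<Longrightarrow> \<psi> (1,0,0,1) = id"
  using group_hom.hom_one[OF SL2_embedding_group_hom] by simp

lemma SL2_embedding_adj_mat:
  assumes "SL2_embedding \<psi>" "A \<in> carrier SL2"
  shows "\<psi> (adj_mat A) = inv\<^bsub>GLV\<^esub> (\<psi> A)"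
  using group_hom.hom_inv[OF SL2_embedding_group_hom[OF assms(1)] assms(2)] assms(2)
  by (simp add: SL2_inv_eq_adj_mat)

lemma SL2_embedding_conj_mat_apply:
  assumes "SL2_embedding \<psi>" "k \<in> carrier SL2" "A \<in> carrier SL2"
  shows "\<psi> (conj_mat k A) = \<psi> k \<circ> \<psi> A \<circ> inv\<^bsub>GLV\<^esub> (\<psi> k)"
  using assms by (simp add: conj_mat_def SL2_embedding_mult SL2_mult_closed adj_mat_closed
      SL2_embedding_adj_mat comp_def)

lemma SL2_embedding_eqD:
  "SL2_embedding \<psi> \<Longrightarrow> \<psi> A = \<psi> B \<Longrightarrow> A \<in> carrier SL2 \<Longrightarrow> B \<in> carrier SL2 \<Longrightarrow> A = B"
  unfolding SL2_embedding_def by (auto dest: inj_onD)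

lemma SL2_embedding_linear:
  "SL2_embedding \<psi> \<Longrightarrow> A \<in> carrier SL2 \<Longrightarrow> bij (\<psi> A) \<and> fp_linear (\<psi> A)"
  using SL2_embedding_closed GLV_carrier_iff by blast

lemma SL2_embedding_additive:
  assumes "SL2_embedding \<psi>" and "A \<in> carrier SL2"
  shows "\<psi> A (x1 + x2, y1 + y2)
    = (fst (\<psi> A (x1, y1)) + fst (\<psi> A (x2, y2)), snd (\<psi> A (x1, y1)) + snd (\<psi> A (x2, y2)))"
proof -
  have "\<psi> A (vadd (x1, y1) (x2, y2)) = vadd (\<psi> A (x1, y1)) (\<psi> A (x2, y2))"
    using SL2_embedding_linear[OF assms] unfolding fp_linear_def by blast
  then show ?thesis by (simp add: vadd_def)
qed

lemma SL2_embedding_split_axes: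
  assumes "SL2_embedding \<psi>" and "A \<in> carrier SL2"
  shows "\<psi> A (x, y) = (fst (\<psi> A (x, 0)) + fst (\<psi> A (0, y)), snd (\<psi> A (x, 0)) + snd (\<psi> A (0, y)))"
  using SL2_embedding_additive[OF assms, of x 0 0 y] by simp

lemma SL2_embedding_nat_map: "SL2_embedding nat_map"
proof -
  have "nat_map \<in> hom SL2 GLV"
    by (rule homI) (simp_all only: nat_map_closed GLV_mult nat_map_mult)
  then show ?thesis unfolding SL2_embedding_def using inj_nat_map inj_on_subset by blast
qed

lemma card_natG:
  "card (natG :: ('a::{finite,field} \<times> 'a \<Rightarrow> 'a \<times> 'a) set) = card (carrier (SL2 :: 'a mat monoid))"
  unfolding natG_def by (rule card_image) (simp add: inj_on_def inj_nat_map[THEN injD])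

lemma card_SL2_embedding_image:
  fixes \<psi> :: "'a::{finite,field} mat \<Rightarrow> ('a \<times> 'a \<Rightarrow> 'a \<times> 'a)"
  shows "SL2_embedding \<psi> \<Longrightarrow> card (\<psi> ` carrier SL2) = card (natG :: ('a \<times> 'a \<Rightarrow> 'a \<times> 'a) set)"
  unfolding SL2_embedding_def by (simp add: card_image card_natG)

lemma SL2_embedding_comp_conj_mat:
  assumes "SL2_embedding \<psi>" "k \<in> carrier SL2"
  shows "SL2_embedding (\<psi> \<circ> conj_mat k)" and "(\<psi> \<circ> conj_mat k) ` carrier SL2 = \<psi> ` carrier SL2"
proof -
  have "\<psi> \<circ> conj_mat k \<in> hom SL2 GLV"
  proof (rule homI)
    fix A B :: "'a mat"
    assume "A \<in> carrier SL2" "B \<in> carrier SL2"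
    with assms show "(\<psi> \<circ> conj_mat k) (A \<otimes>\<^bsub>SL2\<^esub> B) = (\<psi> \<circ> conj_mat k) A \<otimes>\<^bsub>GLV\<^esub> (\<psi> \<circ> conj_mat k) B"
      by (simp del: SL2_mult_eq add: conj_mat_mult SL2_embedding_mult conj_mat_closed comp_def)
  qed (use assms in \<open>simp add: conj_mat_closed SL2_embedding_closed\<close>)
  moreover have "inj_on (\<psi> \<circ> conj_mat k) (carrier SL2)"
  proof (rule inj_onI)
    fix A B :: "'a mat"
    assume "A \<in> carrier SL2" "B \<in> carrier SL2" "(\<psi> \<circ> conj_mat k) A = (\<psi> \<circ> conj_mat k) B"
    with assms show "A = B"
      using SL2_embedding_eqD conj_mat_closed injD[OF inj_conj_mat] by (metis comp_apply)
  qed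
  ultimately show "SL2_embedding (\<psi> \<circ> conj_mat k)" by (simp add: SL2_embedding_def)
  show "(\<psi> \<circ> conj_mat k) ` carrier SL2 = \<psi> ` carrier SL2"
    by (simp only: image_comp[symmetric] conj_mat_image_carrier[OF assms(2)])
qed

lemma SL2_embedding_conj_GLV:
  assumes emb: "SL2_embedding \<psi>" and g: "g \<in> carrier GLV"
  shows "SL2_embedding (\<lambda>A. inv\<^bsub>GLV\<^esub> g \<otimes>\<^bsub>GLV\<^esub> \<psi> A \<otimes>\<^bsub>GLV\<^esub> g)"
proof -
  interpret GLV: group GLV by (rule group_GLV)
  have closed: "\<psi> A \<in> carrier GLV" if "A \<in> carrier SL2" for A
    using SL2_embedding_closed[OF emb that] .
  have cancel: "g \<circ> (inv\<^bsub>GLV\<^esub> g \<circ> f) = f" for f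
    using GLV.r_inv[OF g] by (simp add: comp_assoc[symmetric])
  have "(\<lambda>A. inv\<^bsub>GLV\<^esub> g \<otimes>\<^bsub>GLV\<^esub> \<psi> A \<otimes>\<^bsub>GLV\<^esub> g) \<in> hom SL2 GLV"
  proof (rule homI)
    fix A B :: "'a mat"
    assume A: "A \<in> carrier SL2" and B: "B \<in> carrier SL2"
    have "\<psi> (A \<otimes>\<^bsub>SL2\<^esub> B) = \<psi> A \<otimes>\<^bsub>GLV\<^esub> \<psi> B"
      using SL2_embedding_mult[OF emb A B] by simp
    then show "inv\<^bsub>GLV\<^esub> g \<otimes>\<^bsub>GLV\<^esub> \<psi> (A \<otimes>\<^bsub>SL2\<^esub> B) \<otimes>\<^bsub>GLV\<^esub> g
        = (inv\<^bsub>GLV\<^esub> g \<otimes>\<^bsub>GLV\<^esub> \<psi> A \<otimes>\<^bsub>GLV\<^esub> g) \<otimes>\<^bsub>GLV\<^esub> (inv\<^bsub>GLV\<^esub> g \<otimes>\<^bsub>GLV\<^esub> \<psi> B \<otimes>\<^bsub>GLV\<^esub> g)"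
      by (simp add: comp_assoc cancel)
  qed (use g closed in \<open>auto simp del: GLV_mult\<close>)
  moreover have "inj_on (\<lambda>A. inv\<^bsub>GLV\<^esub> g \<otimes>\<^bsub>GLV\<^esub> \<psi> A \<otimes>\<^bsub>GLV\<^esub> g) (carrier SL2)"
  proof (rule inj_onI)
    fix A B :: "'a mat"
    assume A: "A \<in> carrier SL2" and B: "B \<in> carrier SL2"
      and "inv\<^bsub>GLV\<^esub> g \<otimes>\<^bsub>GLV\<^esub> \<psi> A \<otimes>\<^bsub>GLV\<^esub> g = inv\<^bsub>GLV\<^esub> g \<otimes>\<^bsub>GLV\<^esub> \<psi> B \<otimes>\<^bsub>GLV\<^esub> g"
    then have "\<psi> A = \<psi> B"
      using g closed[OF A] closed[OF B] by (simp del: GLV_mult add: GLV.Units_eq GLV.m_assoc)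
    then show "A = B" using SL2_embedding_eqD[OF emb _ A B] by blast
  qed
  ultimately show ?thesis by (simp add: SL2_embedding_def)
qed

lemma SL2_embedding_image_eq_natG_if_unipotents:
  fixes \<psi> :: "'a::{finite,field} mat \<Rightarrow> ('a \<times> 'a \<Rightarrow> 'a \<times> 'a)"
  assumes emb: "SL2_embedding \<psi>"
    and upper: "\<And>b. nat_map (upper_unip b) \<in> \<psi> ` carrier SL2"
    and lower: "\<And>c. nat_map (lower_unip c) \<in> \<psi> ` carrier SL2"
  shows "\<psi> ` carrier SL2 = natG"
proof -
  define M where "M = {A \<in> carrier SL2. nat_map A \<in> \<psi> ` carrier SL2}"
  have "carrier SL2 \<subseteq> M"
  proof (rule SL2_generated_by_unipotents)
    show "upper_unip b \<in> M" "lower_unip c \<in> M" for b c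
      using upper[of b] lower[of c] by (simp_all add: M_def)
    fix A B :: "'a mat"
    assume "A \<in> M" "B \<in> M"
    then have A: "A \<in> carrier SL2" "nat_map A \<in> \<psi> ` carrier SL2"
      and B: "B \<in> carrier SL2" "nat_map B \<in> \<psi> ` carrier SL2" by (simp_all add: M_def)
    obtain A' where A': "nat_map A = \<psi> A'" "A' \<in> carrier SL2" using A(2) by (rule imageE)
    obtain B' where B': "nat_map B = \<psi> B'" "B' \<in> carrier SL2" using B(2) by (rule imageE)
    have "nat_map (A \<cdot> B) = \<psi> (A' \<cdot> B')"
      by (simp only: nat_map_mult SL2_embedding_mult[OF emb A'(2) B'(2)] A'(1) B'(1))
    then have "nat_map (A \<cdot> B) \<in> \<psi> ` carrier SL2"
      by (rule rev_image_eqI[OF SL2_mult_closed[OF A'(2) B'(2)]])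
    then show "A \<cdot> B \<in> M" using SL2_mult_closed[OF A(1) B(1)] by (simp add: M_def)
  qed
  have "natG \<subseteq> \<psi> ` carrier SL2"
  proof
    fix f assume "f \<in> (natG :: ('a \<times> 'a \<Rightarrow> 'a \<times> 'a) set)"
    then obtain A where "f = nat_map A" "A \<in> carrier SL2" unfolding natG_def by (rule imageE)
    then show "f \<in> \<psi> ` carrier SL2" using \<open>carrier SL2 \<subseteq> M\<close> by (auto simp: M_def)
  qed
  then show ?thesis
    using card_SL2_embedding_image[OF emb] by (intro card_subset_eq[symmetric]) (simp_all add: natG_def)
qed

section \<open>Sylow subgroups of \<open>G\<close> and their normalizers\<close>

lemma nat_map_eq_0_iff:
  "(A::'a::field mat) \<in> carrier SL2 \<Longrightarrow> nat_map A v = (0,0) \<longleftrightarrow> v = (0,0)"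
  by (metis nat_map_adj_mat_apply(1) nat_map_apply mult_zero_right add_0 surj_pair)

lemma group_action_SL2_nonzero_vectors:
  "group_action SL2 (UNIV - {(0,0)}) (\<lambda>A. \<lambda>v\<in>UNIV - {(0,0)}. nat_map (A::'a::field mat) v)"
  (is "group_action SL2 ?X ?\<phi>")
proof -
  have bij: "?\<phi> A \<in> Bij ?X" if A: "A \<in> carrier SL2" for A :: "'a mat"
  proof -
    have "bij_betw (nat_map A) ?X ?X"
    proof (rule bij_betw_byWitness[where f'="nat_map (adj_mat A)"])
      show "\<forall>v\<in>?X. nat_map (adj_mat A) (nat_map A v) = v" "\<forall>v\<in>?X. nat_map A (nat_map (adj_mat A) v) = v"
        by (simp_all add: nat_map_adj_mat_apply[OF A])
      show "nat_map A ` ?X \<subseteq> ?X" "nat_map (adj_mat A) ` ?X \<subseteq> ?X"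
        by (simp_all del: nat_map_apply add: image_subset_iff nat_map_eq_0_iff A adj_mat_closed)
    qed
    then show ?thesis unfolding Bij_def by (simp del: nat_map_apply)
  qed
  have "?\<phi> \<in> hom SL2 (BijGroup ?X)"
  proof (rule homI)
    fix A B :: "'a mat"
    assume A: "A \<in> carrier SL2" and B: "B \<in> carrier SL2"
    have "?\<phi> (A \<cdot> B) = compose ?X (?\<phi> A) (?\<phi> B)"
      using nat_map_eq_0_iff[OF B] by (auto simp: fun_eq_iff compose_def nat_map_mult simp del: SL2_mult_eq)
    then show "?\<phi> (A \<otimes>\<^bsub>SL2\<^esub> B) = ?\<phi> A \<otimes>\<^bsub>BijGroup ?X\<^esub> ?\<phi> B"
      using bij[OF A] bij[OF B] by (simp add: BijGroup_def)
  qed (simp add: BijGroup_def bij)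
  then show ?thesis
    by (simp add: group_action_def group_hom_def group_hom_axioms_def group_SL2 group_BijGroup)
qed

lemma SL2_p_subgroup_fixes_vector:
  fixes P :: "'a::{finite,field} mat set"
  assumes "subgroup P SL2" and "card P = p ^ a" and "prime p" and "p dvd card (UNIV :: 'a set)"
  shows "\<exists>v. v \<noteq> (0,0) \<and> (\<forall>A\<in>P. nat_map A v = v)"
proof -
  let ?X = "UNIV - {(0::'a,0::'a)}"
  have "card ?X = card (UNIV :: 'a set) * card (UNIV :: 'a set) - 1"
    by (simp add: card_Diff_singleton card_cartesian_product[symmetric])
  moreover have "\<not> p dvd card (UNIV :: 'a set) * card (UNIV :: 'a set) - 1"
  proof
    assume "p dvd card (UNIV :: 'a set) * card (UNIV :: 'a set) - 1"
    then have "p dvd card (UNIV :: 'a set) * card (UNIV :: 'a set) - (card (UNIV :: 'a set) * card (UNIV :: 'a set) - 1)"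
      using assms(4) by (simp add: dvd_diff_nat)
    then show False using assms(3) finite_UNIV_card_ge_0[where 'a='a] by (simp add: Suc_leI)
  qed
  ultimately have not_dvd: "\<not> p dvd card ?X" by simp
  have order: "order (SL2\<lparr>carrier := P\<rparr>) = p ^ a" using assms(2) by (simp add: order_def)
  have "\<exists>v\<in>?X. \<forall>A\<in>carrier (SL2\<lparr>carrier := P\<rparr>). (\<lambda>v\<in>?X. nat_map A v) v = v"
    by (rule group_action.p_group_fixed_point[OF group_action.induced_action[OF
        group_action_SL2_nonzero_vectors assms(1)] _ assms(3) order not_dvd]) simp
  then show ?thesis by (auto simp del: nat_map_apply)
qed

lemma unipotent_if_fixes_first_basis_vector:
  assumes "(A::'a::field mat) \<in> carrier SL2" and "nat_map A (1,0) = (1,0)"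
  shows "A \<in> unipotent"
proof -
  obtain a b c d where A_eq: "A = (a,b,c,d)" by (cases A)
  then have "a = 1" "c = 0" "d = 1" using assms by simp_all
  then show ?thesis by (simp add: A_eq unipotent_def upper_unip_def)
qed

lemma SL2_p_subgroup_conj_unipotent:
  fixes P :: "'a::{finite,field} mat set"
  assumes "subgroup P SL2" and "card P = p ^ a" and "prime p" and "p dvd card (UNIV :: 'a set)"
  obtains h where "h \<in> carrier SL2" and "P \<subseteq> conj_mat h ` unipotent"
proof -
  obtain v where v: "v \<noteq> (0,0)" "\<forall>A\<in>P. nat_map A v = v"
    using SL2_p_subgroup_fixes_vector[OF assms] by blast
  obtain v1 v2 where v_eq: "v = (v1, v2)" by (cases v)
  obtain h where h: "h \<in> carrier SL2" "nat_map h (1,0) = v"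
  proof (cases "v1 = 0")
    case True
    then show ?thesis using that[of "(0, - inverse v2, v2, 0)"] v v_eq by simp
  next
    case False
    then show ?thesis using that[of "(v1, 0, v2, inverse v1)"] v_eq by simp
  qed
  have "P \<subseteq> conj_mat h ` unipotent"
  proof
    fix A assume A: "A \<in> P"
    then have A_SL2: "A \<in> carrier SL2" using subgroup.subset[OF assms(1)] by blast
    define K where "K = conj_mat (adj_mat h) A"
    have "nat_map K (1,0) = nat_map (adj_mat h) (nat_map A (nat_map h (1,0)))"
      by (simp only: K_def conj_mat_def adj_mat_adj_mat nat_map_mult comp_apply)
    also have "\<dots> = (1,0)"
      using A v(2) h nat_map_adj_mat_apply(1)[OF h(1), of "(1,0)"] by (simp del: nat_map_apply)
    finally have "K \<in> unipotent"
      using unipotent_if_fixes_first_basis_vector conj_mat_closed adj_mat_closed h(1) A_SL2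
      unfolding K_def by blast
    moreover have "A = conj_mat h K" using conj_mat_adj_mat(2)[OF h(1)] by (simp add: K_def)
    ultimately show "A \<in> conj_mat h ` unipotent" by blast
  qed
  then show thesis using that h by blast
qed

lemma card_conj_mat_unipotent:
  assumes "(h::'a::{finite,field} mat) \<in> carrier SL2"
  shows "card (conj_mat h ` unipotent) = card (UNIV :: 'a set)"
  using card_image[OF inj_on_subset[OF inj_conj_mat[OF assms] subset_UNIV]] card_unipotent by simp

lemma sylow_natG_conj_unipotent:
  fixes S :: "('a::{finite,field} \<times> 'a \<Rightarrow> 'a \<times> 'a) set"
  assumes p: "prime p" and q: "card (UNIV :: 'a set) = p ^ m" and m: "m \<ge> 1"
    and sylow: "is_sylow p natG S"
  obtains h where "h \<in> carrier SL2" and "S = nat_map ` conj_mat h ` unipotent"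
proof -
  let ?q = "card (UNIV :: 'a set)"
  obtain a where S_natG: "S \<subseteq> natG" and S_subgroup: "subgroup S GLV" and card_S: "card S = p ^ a"
    and not_dvd: "\<not> p dvd card (natG :: ('a \<times> 'a \<Rightarrow> 'a \<times> 'a) set) div card S"
    using sylow unfolding is_sylow_def by blast
  define P where "P = carrier SL2 \<inter> nat_map -` S"
  have P_subgroup: "subgroup P SL2"
    unfolding P_def
    by (rule group_hom.subgroup_vimage[OF SL2_embedding_group_hom[OF SL2_embedding_nat_map] S_subgroup])
  have S_eq: "S = nat_map ` P" using S_natG unfolding P_def natG_def by blast
  have card_P: "card P = p ^ a"
    using card_S card_image[OF inj_on_subset[OF inj_nat_map subset_UNIV], of P] by (simp add: S_eq)
  have "p dvd ?q" using q m by simp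
  then obtain h where h: "h \<in> carrier SL2" "P \<subseteq> conj_mat h ` unipotent"
    using SL2_p_subgroup_conj_unipotent[OF P_subgroup card_P p] by blast
  have "p ^ a \<le> p ^ m"
    using card_mono[OF _ h(2)] card_conj_mat_unipotent[OF h(1)] card_P q by simp
  then have "a \<le> m" using power_le_imp_le_exp prime_gt_1_nat[OF p] by blast
  have "a = m"
  proof (rule ccontr)
    assume "a \<noteq> m"
    then have "p dvd p ^ (m - a) * (?q * ?q - 1)" using \<open>a \<le> m\<close> by simp
    moreover have "card (natG :: ('a \<times> 'a \<Rightarrow> 'a \<times> 'a) set) div card S = p ^ (m - a) * (?q * ?q - 1)"
    proof -
      have "?q = p ^ a * p ^ (m - a)" using q \<open>a \<le> m\<close> by (simp add: power_add[symmetric])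
      then show ?thesis using card_S p by (simp add: card_natG card_SL2 prime_gt_0_nat)
    qed
    ultimately show False using not_dvd by simp
  qed
  then have "P = conj_mat h ` unipotent"
    using h card_conj_mat_unipotent[OF h(1)] card_P q by (intro card_subset_eq) simp_all
  then show thesis using that h(1) S_eq by blast
qed

lemma conj_borel_subset_normalizer:
  assumes h: "(h::'a::field mat) \<in> carrier SL2"
  shows "nat_map ` conj_mat h ` borel \<subseteq> normalizer_in natG (nat_map ` conj_mat h ` unipotent)"
proof
  fix f
  assume "f \<in> nat_map ` conj_mat h ` borel"
  then obtain B where B: "B \<in> borel" and f: "f = nat_map (conj_mat h B)" by blast
  have k: "conj_mat h B \<in> carrier SL2" using conj_mat_closed[OF h] borel_subset_SL2 B by blast
  have "(\<lambda>s. f \<otimes>\<^bsub>GLV\<^esub> s \<otimes>\<^bsub>GLV\<^esub> inv\<^bsub>GLV\<^esub> f) ` nat_map ` conj_mat h ` unipotent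
      = nat_map ` conj_mat (conj_mat h B) ` conj_mat h ` unipotent"
    unfolding f image_image by (simp only: GLV_conj_nat_map[OF k])
  also have "\<dots> = nat_map ` conj_mat h ` conj_mat B ` unipotent"
    by (simp only: image_image conj_mat_by_conj_mat[OF h])
  also have "\<dots> = nat_map ` conj_mat h ` unipotent"
    by (subst conj_mat_borel_unipotent(2)[OF B]) (rule refl)
  finally have "(\<lambda>s. f \<otimes>\<^bsub>GLV\<^esub> s \<otimes>\<^bsub>GLV\<^esub> inv\<^bsub>GLV\<^esub> f) ` nat_map ` conj_mat h ` unipotent
      = nat_map ` conj_mat h ` unipotent" .
  moreover have "f \<in> natG" using k f by (simp add: natG_def)
  ultimately show "f \<in> normalizer_in natG (nat_map ` conj_mat h ` unipotent)"
    by (simp add: normalizer_in_def)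
qed

section \<open>The case \<open>q = 3\<close>\<close>

definition mat_of :: "('a::field \<times> 'a \<Rightarrow> 'a \<times> 'a) \<Rightarrow> 'a mat" where
  "mat_of f = (fst (f (1,0)), fst (f (0,1)), snd (f (1,0)), snd (f (0,1)))"

definition det_mat :: "'a::field mat \<Rightarrow> 'a" where
  "det_mat A = (case A of (a,b,c,d) \<Rightarrow> a*d - b*c)"

lemma det_mat_mult: "det_mat ((A::'a::field mat) \<cdot> B) = det_mat A * det_mat B"
  by (cases A; cases B) (simp add: det_mat_def algebra_simps)

lemma SL2_carrier_iff_det_mat: "(A::'a::field mat) \<in> carrier SL2 \<longleftrightarrow> det_mat A = 1"
  by (cases A) (simp add: det_mat_def)

lemma det_mat_nonzero_if_inj:
  assumes "inj (nat_map (A::'a::field mat))"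
  shows "det_mat A \<noteq> 0"
proof
  assume det: "det_mat A = 0"
  obtain a b c d where A: "A = (a,b,c,d)" by (cases A)
  have "nat_map A (d, -c) = nat_map A (0,0)" "nat_map A (-b, a) = nat_map A (0,0)"
    using det by (simp_all add: A det_mat_def algebra_simps)
  then have "a = 0" "b = 0" "c = 0" "d = 0" using injD[OF assms] by fastforce+
  then have "nat_map A (1,0) = nat_map A (0,0)" by (simp add: A)
  then show False using injD[OF assms] by fastforce
qed

lemma fp_linear_eq_nat_map_mat_of:
  fixes f :: "'a::field \<times> 'a \<Rightarrow> 'a \<times> 'a"
  assumes prime_field: "\<And>x::'a. \<exists>k::nat. x = of_nat k" and "fp_linear f"
  shows "f = nat_map (mat_of f)"
proof
  fix v :: "'a \<times> 'a"
  obtain x y where v: "v = (x,y)" by (cases v)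
  have smul: "f (smul c w) = smul c (f w)" for c w
    using assms(2) prime_field[of c] unfolding fp_linear_def by blast
  have "f (x, y) = f (vadd (smul x (1,0)) (smul y (0,1)))" by (simp add: vadd_def smul_def)
  also have "\<dots> = vadd (smul x (f (1,0))) (smul y (f (0,1)))"
    using assms(2) unfolding fp_linear_def by (simp only: smul)
  finally show "f v = nat_map (mat_of f) v" by (simp add: v vadd_def smul_def mat_of_def algebra_simps)
qed

lemma SL2_embedding_eq_nat_map_card3:
  fixes \<psi> :: "'a::{finite,field} mat \<Rightarrow> ('a \<times> 'a \<Rightarrow> 'a \<times> 'a)"
  assumes emb: "SL2_embedding \<psi>" and q: "card (UNIV :: 'a set) = 3" and A: "A \<in> carrier SL2"
  shows "\<psi> A = nat_map (mat_of (\<psi> A))"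
proof -
  have "\<exists>k::nat. x = of_nat k" for x :: 'a
  proof -
    have "x \<in> {0, 1, 2}" using card3_field(2)[OF q] by blast
    then show ?thesis by (metis empty_iff insert_iff of_nat_0 of_nat_1 of_nat_numeral)
  qed
  then show ?thesis using fp_linear_eq_nat_map_mat_of SL2_embedding_linear[OF emb A] by blast
qed

lemma SL2_embedding_det_mult_card3:
  fixes \<psi> :: "'a::{finite,field} mat \<Rightarrow> ('a \<times> 'a \<Rightarrow> 'a \<times> 'a)"
  assumes emb: "SL2_embedding \<psi>" and q: "card (UNIV :: 'a set) = 3"
    and A: "A \<in> carrier SL2" and B: "B \<in> carrier SL2"
  shows "det_mat (mat_of (\<psi> (A \<cdot> B))) = det_mat (mat_of (\<psi> A)) * det_mat (mat_of (\<psi> B))"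
proof -
  have "nat_map (mat_of (\<psi> (A \<cdot> B))) = nat_map (mat_of (\<psi> A) \<cdot> mat_of (\<psi> B))"
    using SL2_embedding_eq_nat_map_card3[OF emb q SL2_mult_closed[OF A B]]
      SL2_embedding_eq_nat_map_card3[OF emb q A] SL2_embedding_eq_nat_map_card3[OF emb q B]
      SL2_embedding_mult[OF emb A B] by (simp only: nat_map_mult)
  then have "mat_of (\<psi> (A \<cdot> B)) = mat_of (\<psi> A) \<cdot> mat_of (\<psi> B)" by (rule injD[OF inj_nat_map])
  then show ?thesis by (simp only: det_mat_mult)
qed

lemma SL2_embedding_det_square_card3:
  fixes \<psi> :: "'a::{finite,field} mat \<Rightarrow> ('a \<times> 'a \<Rightarrow> 'a \<times> 'a)"
  assumes emb: "SL2_embedding \<psi>" and q: "card (UNIV :: 'a set) = 3" and A: "A \<in> carrier SL2"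
  shows "det_mat (mat_of (\<psi> (A \<cdot> A))) = 1"
proof -
  have "inj (nat_map (mat_of (\<psi> A)))"
    using SL2_embedding_eq_nat_map_card3[OF emb q A] SL2_embedding_linear[OF emb A] bij_is_inj by metis
  then have "det_mat (mat_of (\<psi> A)) \<noteq> 0" by (rule det_mat_nonzero_if_inj)
  then have "det_mat (mat_of (\<psi> A)) \<in> {1, 2}" using card3_field(2)[OF q] by blast
  moreover have "(2::'a) * 2 = 3 + 1" by simp
  ultimately show ?thesis
    using SL2_embedding_det_mult_card3[OF emb q A A] card3_field(1)[OF q] by auto
qed

lemma SL2_embedding_image_eq_natG_card3:
  fixes \<psi> :: "'a::{finite,field} mat \<Rightarrow> ('a \<times> 'a \<Rightarrow> 'a \<times> 'a)"
  assumes emb: "SL2_embedding \<psi>" and q: "card (UNIV :: 'a set) = 3"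
  shows "\<psi> ` carrier SL2 = natG"
proof -
  have double: "(2::'a) * b + 2 * b = b" for b
  proof -
    have "(2::'a) * b + 2 * b = 3 * b + b" by (simp add: algebra_simps)
    then show ?thesis using card3_field(1)[OF q] by simp
  qed
  have generated: "carrier SL2 \<subseteq> {A \<in> carrier SL2. det_mat (mat_of (\<psi> A)) = 1}"
  proof (rule SL2_generated_by_unipotents)
    show "upper_unip b \<in> {A \<in> carrier SL2. det_mat (mat_of (\<psi> A)) = 1}" for b
      using SL2_embedding_det_square_card3[OF emb q, of "upper_unip (2 * b)"] double[of b]
      by (simp add: upper_unip_mult)
    show "lower_unip c \<in> {A \<in> carrier SL2. det_mat (mat_of (\<psi> A)) = 1}" for c
      using SL2_embedding_det_square_card3[OF emb q, of "lower_unip (2 * c)"] double[of c]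
      by (simp add: lower_unip_def)
  qed (simp add: SL2_mult_closed SL2_embedding_det_mult_card3[OF emb q])
  have "\<psi> A \<in> natG" if "A \<in> carrier SL2" for A
  proof -
    have "det_mat (mat_of (\<psi> A)) = 1" using generated that by blast
    then have "mat_of (\<psi> A) \<in> carrier SL2" by (simp only: SL2_carrier_iff_det_mat)
    then show ?thesis
      unfolding natG_def using SL2_embedding_eq_nat_map_card3[OF emb q that] by (rule rev_image_eqI)
  qed
  then have "\<psi> ` carrier SL2 \<subseteq> natG" by blast
  then show ?thesis
    using card_SL2_embedding_image[OF emb] by (intro card_subset_eq) (simp_all add: natG_def)
qed

section \<open>The case \<open>q > 3\<close>\<close>

lemma SL2_embedding_conj_unipotent:
  fixes \<psi> :: "'a::{finite,field} mat \<Rightarrow> ('a \<times> 'a \<Rightarrow> 'a \<times> 'a)"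
  assumes emb: "SL2_embedding \<psi>" and U: "nat_map ` unipotent \<subseteq> \<psi> ` carrier SL2"
    and p: "prime p" and q: "card (UNIV :: 'a set) = p ^ m" and m: "m \<ge> 1"
  obtains k where "k \<in> carrier SL2" and "\<psi> ` conj_mat k ` unipotent = nat_map ` unipotent"
proof -
  define P where "P = carrier SL2 \<inter> \<psi> -` (nat_map ` unipotent)"
  have "subgroup (nat_map ` unipotent) (GLV :: ('a \<times> 'a \<Rightarrow> 'a \<times> 'a) monoid)"
    by (rule group_hom.subgroup_img_is_subgroup[OF SL2_embedding_group_hom[OF SL2_embedding_nat_map]
          subgroup_unipotent])
  then have P_subgroup: "subgroup P SL2"
    unfolding P_def by (rule group_hom.subgroup_vimage[OF SL2_embedding_group_hom[OF emb]])
  have image_P: "\<psi> ` P = nat_map ` unipotent"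
  proof
    show "\<psi> ` P \<subseteq> nat_map ` unipotent" unfolding P_def by blast
    show "nat_map ` unipotent \<subseteq> \<psi> ` P"
    proof
      fix f :: "'a \<times> 'a \<Rightarrow> 'a \<times> 'a"
      assume f: "f \<in> nat_map ` unipotent"
      then obtain A where "A \<in> carrier SL2" "f = \<psi> A" using U by blast
      then show "f \<in> \<psi> ` P" using f unfolding P_def by blast
    qed
  qed
  have "card P = card (\<psi> ` P)"
    using emb unfolding SL2_embedding_def P_def by (simp add: card_image inj_on_Int)
  also have "\<dots> = card (unipotent :: 'a mat set)"
    unfolding image_P by (rule card_image[OF inj_on_subset[OF inj_nat_map subset_UNIV]])
  finally have card_P: "card P = p ^ m" using card_unipotent[where 'a='a] q by simp
  moreover have "p dvd card (UNIV :: 'a set)" using q m by simp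
  ultimately obtain k where k: "k \<in> carrier SL2" "P \<subseteq> conj_mat k ` unipotent"
    using SL2_p_subgroup_conj_unipotent[OF P_subgroup _ p] by metis
  have "P = conj_mat k ` unipotent"
    using k card_conj_mat_unipotent[OF k(1)] card_P q by (intro card_subset_eq) simp_all
  then show thesis using that k(1) image_P by simp
qed

lemma SL2_embedding_vimage_borel:
  assumes emb: "SL2_embedding \<psi>" and U: "\<psi> ` unipotent = nat_map ` unipotent"
    and A: "A \<in> carrier SL2" and A_borel: "\<psi> A \<in> nat_map ` borel"
  shows "A \<in> borel"
proof -
  obtain B where B: "B \<in> borel" "\<psi> A = nat_map B" using A_borel by blast
  have B_SL2: "B \<in> carrier SL2" using B(1) borel_subset_SL2 by blast
  obtain b where b: "\<psi> (upper_unip 1) = nat_map (upper_unip b)"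
    using U by (metis (no_types, lifting) imageE image_eqI rangeI unipotent_def)
  have "\<psi> (conj_mat A (upper_unip 1)) = nat_map (conj_mat B (upper_unip b))"
    using SL2_embedding_conj_mat_apply[OF emb A upper_unip_closed] B(2) b GLV_conj_nat_map[OF B_SL2]
    by simp
  also have "\<dots> \<in> \<psi> ` unipotent"
    unfolding U conj_mat_borel_unipotent(1)[OF B(1)] by (simp add: unipotent_def)
  finally obtain u where u: "u \<in> unipotent" "\<psi> (conj_mat A (upper_unip 1)) = \<psi> u" by blast
  have "conj_mat A (upper_unip 1) \<in> unipotent"
    using SL2_embedding_eqD[OF emb u(2) conj_mat_closed[OF A upper_unip_closed]] u(1)
      subgroup.subset[OF subgroup_unipotent] by blast
  moreover obtain a b c d where A_eq: "A = (a,b,c,d)" by (cases A)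
  ultimately have "c * c = 0"
    by (auto simp: unipotent_def upper_unip_def conj_mat_def adj_mat_def algebra_simps)
  then show ?thesis using A borel_if_lower_left_eq_0 by (simp add: A_eq)
qed

lemma SL2_embedding_torus_if_diag_mat:
  fixes \<psi> :: "'a::field mat \<Rightarrow> ('a \<times> 'a \<Rightarrow> 'a \<times> 'a)" and a a0 :: 'a
  assumes emb: "SL2_embedding \<psi>" and U: "\<psi> ` unipotent = nat_map ` unipotent"
    and Bor: "nat_map ` borel \<subseteq> \<psi> ` carrier SL2"
    and a: "a \<noteq> 0" "a * a \<noteq> 1" and diag_a: "\<psi> (diag_mat a) = nat_map (diag_mat a0)"
  shows "nat_map ` torus \<subseteq> \<psi> ` torus"
proof
  fix f assume "f \<in> nat_map ` (torus :: 'a mat set)"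
  then obtain t where t: "t \<noteq> 0" "f = nat_map (diag_mat t)"
    unfolding torus_def image_image by blast
  then have "f \<in> \<psi> ` carrier SL2"
    using Bor subsetD[OF torus_subset_borel diag_mat_in_torus[OF t(1)]] by blast
  then obtain D where D: "D \<in> carrier SL2" "\<psi> D = nat_map (diag_mat t)" using t(2) by blast
  have "D \<in> borel"
    using SL2_embedding_vimage_borel[OF emb U D(1)] D(2)
      subsetD[OF torus_subset_borel diag_mat_in_torus[OF t(1)]] by simp
  moreover have "D \<cdot> diag_mat a = diag_mat a \<cdot> D"
  proof (rule SL2_embedding_eqD[OF emb])
    have "\<psi> (D \<cdot> diag_mat a) = nat_map (diag_mat (t * a0))"
      using SL2_embedding_mult[OF emb D(1) diag_mat_closed[OF a(1)]] D(2) diag_a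
      by (simp add: nat_map_mult[symmetric] diag_mat_mult)
    also have "\<dots> = \<psi> (diag_mat a \<cdot> D)"
      using SL2_embedding_mult[OF emb diag_mat_closed[OF a(1)] D(1)] D(2) diag_a
      by (simp add: nat_map_mult[symmetric] diag_mat_mult mult.commute)
    finally show "\<psi> (D \<cdot> diag_mat a) = \<psi> (diag_mat a \<cdot> D)" .
  qed (use SL2_mult_closed[OF D(1) diag_mat_closed[OF a(1)]]
      SL2_mult_closed[OF diag_mat_closed[OF a(1)] D(1)] in simp_all)
  ultimately have "D \<in> torus" using borel_commuting_with_diag_mat a by blast
  then show "f \<in> \<psi> ` torus" using D(2) t(2) by (metis image_eqI)
qed

lemma SL2_embedding_conj_torus:
  fixes \<psi> :: "'a::field mat \<Rightarrow> ('a \<times> 'a \<Rightarrow> 'a \<times> 'a)" and a0 :: 'a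
  assumes emb: "SL2_embedding \<psi>" and U: "\<psi> ` unipotent = nat_map ` unipotent"
    and Bor: "nat_map ` borel \<subseteq> \<psi> ` carrier SL2" and a0: "a0 \<noteq> 0" "a0 * a0 \<noteq> 1"
  obtains k where "k \<in> carrier SL2" and "\<psi> ` conj_mat k ` unipotent = nat_map ` unipotent"
    and "nat_map ` torus \<subseteq> \<psi> ` conj_mat k ` torus"
proof -
  have "diag_mat a0 \<in> borel" using subsetD[OF torus_subset_borel diag_mat_in_torus[OF a0(1)]] .
  then have "nat_map (diag_mat a0) \<in> \<psi> ` carrier SL2" using subsetD[OF Bor imageI] by blast
  then obtain e where e: "e \<in> carrier SL2" "\<psi> e = nat_map (diag_mat a0)" by (metis imageE)
  have "e \<in> borel" using SL2_embedding_vimage_borel[OF emb U e(1)] e(2) \<open>diag_mat a0 \<in> borel\<close> by simp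
  then obtain a \<beta> where e_eq: "e = (a, \<beta>, 0, inverse a)" and a: "a \<noteq> 0" by (auto simp: borel_def)
  have "a * a \<noteq> 1"
  proof
    assume "a * a = 1"
    then have "inverse a = a" by (metis inverse_unique)
    then have "e \<cdot> e \<in> unipotent" using \<open>a * a = 1\<close>
      by (simp add: e_eq unipotent_def upper_unip_def)
    moreover have "\<psi> (e \<cdot> e) = nat_map (diag_mat (a0 * a0))"
      using SL2_embedding_mult[OF emb e(1) e(1)] e(2) by (simp add: nat_map_mult[symmetric] diag_mat_mult)
    ultimately have "nat_map (diag_mat (a0 * a0)) \<in> nat_map ` unipotent" by (metis U imageI)
    then have "diag_mat (a0 * a0) \<in> unipotent" by (simp only: inj_image_mem_iff[OF inj_nat_map])
    then show False using a0 by (auto simp: unipotent_def upper_unip_def diag_mat_def)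
  qed
  define k where "k = upper_unip (\<beta> / (inverse a - a))"
  have k: "k \<in> carrier SL2" "k \<in> borel" using unipotent_subset_borel by (auto simp: k_def unipotent_def)
  define \<psi>' where "\<psi>' = \<psi> \<circ> conj_mat k"
  have emb': "SL2_embedding \<psi>'" and image': "\<psi>' ` carrier SL2 = \<psi> ` carrier SL2"
    unfolding \<psi>'_def using SL2_embedding_comp_conj_mat[OF emb k(1)] by simp_all
  have U': "\<psi>' ` unipotent = nat_map ` unipotent"
    unfolding \<psi>'_def image_comp[symmetric] conj_mat_borel_unipotent(2)[OF k(2)] by (rule U)
  have "\<psi>' (diag_mat a) = nat_map (diag_mat a0)"
    using conj_upper_unip_diag_mat[OF a \<open>a * a \<noteq> 1\<close>] e(2) by (simp add: \<psi>'_def k_def e_eq)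
  then have "nat_map ` torus \<subseteq> \<psi>' ` torus"
    using SL2_embedding_torus_if_diag_mat[OF emb' U' _ a \<open>a * a \<noteq> 1\<close>] Bor image' by simp
  then show thesis using that k(1) U' by (simp add: \<psi>'_def image_comp)
qed

lemma SL2_embedding_weyl_mat_inverts_torus:
  fixes \<psi> :: "'a::field mat \<Rightarrow> ('a \<times> 'a \<Rightarrow> 'a \<times> 'a)"
  assumes emb: "SL2_embedding \<psi>" and T: "nat_map ` torus \<subseteq> \<psi> ` torus"
    and \<beta>: "\<beta> \<noteq> 0" and t: "t \<noteq> 0"
  shows "\<psi> (weyl_mat \<beta>) (nat_map (diag_mat t) v) = nat_map (diag_mat (inverse t)) (\<psi> (weyl_mat \<beta>) v)"
proof -
  have w_SL2: "weyl_mat \<beta> \<in> carrier SL2" using weyl_mat_closed[OF \<beta>] .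
  have "nat_map (diag_mat t) \<in> \<psi> ` torus"
    using subsetD[OF T imageI[where f=nat_map, OF diag_mat_in_torus[OF t]]] .
  then obtain s where "nat_map (diag_mat t) = \<psi> (diag_mat s)" "s \<in> UNIV - {0}"
    unfolding torus_def image_image by (rule imageE)
  then have s: "s \<noteq> 0" "\<psi> (diag_mat s) = nat_map (diag_mat t)" by simp_all
  have s_SL2: "diag_mat s \<in> carrier SL2" "diag_mat (inverse s) \<in> carrier SL2"
    using s(1) by (simp_all add: diag_mat_closed)
  have "\<psi> (diag_mat (inverse s)) = nat_map (diag_mat (inverse t))"
  proof -
    have "adj_mat (diag_mat s) = diag_mat (inverse s)" "adj_mat (diag_mat t) = diag_mat (inverse t)"
      by (simp_all add: adj_mat_def diag_mat_def)
    then show ?thesis using SL2_embedding_adj_mat[OF emb s_SL2(1)] s(2) GLV_inv_nat_map t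
      by (metis diag_mat_closed)
  qed
  moreover have "weyl_mat \<beta> \<cdot> diag_mat s = diag_mat (inverse s) \<cdot> weyl_mat \<beta>"
    using s(1) \<beta> by (simp add: weyl_mat_def diag_mat_def)
  ultimately have "\<psi> (weyl_mat \<beta>) \<circ> nat_map (diag_mat t) = nat_map (diag_mat (inverse t)) \<circ> \<psi> (weyl_mat \<beta>)"
    using SL2_embedding_mult[OF emb w_SL2 s_SL2(1)] SL2_embedding_mult[OF emb s_SL2(2) w_SL2] s(2)
    by metis
  then show ?thesis by (metis comp_apply)
qed

lemma SL2_embedding_weyl_mat_antidiagonal:
  fixes \<psi> :: "'a::field mat \<Rightarrow> ('a \<times> 'a \<Rightarrow> 'a \<times> 'a)" and a :: 'a
  assumes emb: "SL2_embedding \<psi>" and T: "nat_map ` torus \<subseteq> \<psi> ` torus"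
    and a: "a \<noteq> 0" "a + 1 \<noteq> 0" "a * a + a + 1 \<noteq> 0" and \<beta>: "\<beta> \<noteq> 0"
  shows "fst (\<psi> (weyl_mat \<beta>) (x, 0)) = 0" and "snd (\<psi> (weyl_mat \<beta>) (0, y)) = 0"
proof -
  define w where "w = \<psi> (weyl_mat \<beta>)"
  note w_add = SL2_embedding_additive[OF emb weyl_mat_closed[OF \<beta>], folded w_def]
  note w_diag = SL2_embedding_weyl_mat_inverts_torus[OF emb T \<beta>, folded w_def]
  show "fst (w (x, 0)) = 0"
  proof (rule additive_antihomogeneous_eq_0[where \<alpha> = "\<lambda>x. fst (w (x, 0))", OF _ _ a])
    show "fst (w (x + y, 0)) = fst (w (x, 0)) + fst (w (y, 0))" for x y
      using w_add[of x y 0 0] by simp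
    show "fst (w (t * x, 0)) = inverse t * fst (w (x, 0))" if "t \<noteq> 0" for t x
      using w_diag[OF that, of "(x, 0)"] by (cases "w (x, 0)") (simp add: diag_mat_def)
  qed
  show "snd (w (0, y)) = 0"
  proof (rule additive_antihomogeneous_eq_0[where \<alpha> = "\<lambda>y. snd (w (0, y))", OF _ _ a])
    show "snd (w (0, x + y)) = snd (w (0, x)) + snd (w (0, y))" for x y
      using w_add[of 0 0 x y] by simp
    show "snd (w (0, t * y)) = inverse t * snd (w (0, y))" if "t \<noteq> 0" for t y
      using w_diag[of "inverse t" "(0, y)"] that by (cases "w (0, y)") (simp add: diag_mat_def)
  qed
qed

lemma SL2_embedding_upper_unip_preimage:
  fixes \<psi> :: "'a::field mat \<Rightarrow> ('a \<times> 'a \<Rightarrow> 'a \<times> 'a)"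
  assumes emb: "SL2_embedding \<psi>" and U: "\<psi> ` unipotent = nat_map ` unipotent" and "c \<noteq> 0"
  obtains b where "b \<noteq> 0" and "\<psi> (upper_unip b) = nat_map (upper_unip c)"
proof -
  have "nat_map (upper_unip c) \<in> \<psi> ` unipotent"
    by (simp only: U) (simp add: unipotent_def)
  then obtain b where b: "\<psi> (upper_unip b) = nat_map (upper_unip c)"
    unfolding unipotent_def image_image by (metis imageE)
  have "b \<noteq> 0"
  proof
    assume "b = 0"
    then have "nat_map (upper_unip c) = nat_map (1,0,0,1)"
      using b SL2_embedding_one[OF emb] by (simp add: upper_unip_0 nat_map_one)
    then have "upper_unip c = (1,0,0,1)" by (rule injD[OF inj_nat_map])
    then show False using assms(3) by (simp add: upper_unip_def)
  qed
  then show thesis using that b by blast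
qed

lemma SL2_embedding_lower_unip_shape:
  fixes \<psi> :: "'a::field mat \<Rightarrow> ('a \<times> 'a \<Rightarrow> 'a \<times> 'a)" and a :: 'a
  assumes emb: "SL2_embedding \<psi>" and U: "\<psi> ` unipotent = nat_map ` unipotent"
    and T: "nat_map ` torus \<subseteq> \<psi> ` torus" and a: "a \<noteq> 0" "a + 1 \<noteq> 0" "a * a + a + 1 \<noteq> 0"
  shows "fst (\<psi> (lower_unip c) (x, 0)) = x" and "\<psi> (lower_unip c) (0, y) = (0, y)"
proof -
  define n where "n = \<psi> (weyl_mat 1)"
  have w_SL2: "weyl_mat (1::'a) \<in> carrier SL2" by (simp add: weyl_mat_closed)
  have n_axes: "n (x, 0) = (0, snd (n (x, 0)))" "n (0, y) = (fst (n (0, y)), 0)" for x y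
    using SL2_embedding_weyl_mat_antidiagonal[OF emb T a one_neq_zero] unfolding n_def
    by (metis prod.collapse)+
  have n_split: "n (x, y) = (fst (n (0, y)), snd (n (x, 0)))" for x y
    using SL2_embedding_split_axes[OF emb w_SL2, of x y] n_axes(1)[of x] n_axes(2)[of y] unfolding n_def
    by (metis add.left_neutral add.right_neutral fst_conv snd_conv)
  have "surj n" using SL2_embedding_linear[OF emb w_SL2] bij_is_surj unfolding n_def by blast
  obtain b where b: "\<psi> (upper_unip (- c)) = nat_map (upper_unip b)"
    using U unfolding unipotent_def by (metis (no_types, lifting) imageE image_eqI rangeI)
  have "\<psi> (lower_unip c) \<circ> n = \<psi> (lower_unip c \<cdot> weyl_mat 1)"
    using SL2_embedding_mult[OF emb lower_unip_closed w_SL2] unfolding n_def by simp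
  also have "lower_unip c \<cdot> weyl_mat 1 = weyl_mat 1 \<cdot> upper_unip (- c)"
    by (simp add: lower_unip_def weyl_mat_def upper_unip_def)
  also have "\<psi> \<dots> = n \<circ> nat_map (upper_unip b)"
    using SL2_embedding_mult[OF emb w_SL2 upper_unip_closed] b unfolding n_def by simp
  finally have intertwine: "\<psi> (lower_unip c) (n v) = n (nat_map (upper_unip b) v)" for v
    by (metis comp_apply)
  obtain u where "n u = (x, 0)" using \<open>surj n\<close> by (metis surjD)
  then have u: "n (0, snd u) = (x, 0)" using n_split[of "fst u" "snd u"] n_axes(2)[of "snd u"] by simp
  show "fst (\<psi> (lower_unip c) (x, 0)) = x"
    using intertwine[of "(0, snd u)"] u n_split[of "b * snd u" "snd u"] by (simp add: upper_unip_def)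
  obtain u' where "n u' = (0, y)" using \<open>surj n\<close> by (metis surjD)
  then have u': "n (fst u', 0) = (0, y)" using n_split[of "fst u'" "snd u'"] n_axes(1)[of "fst u'"] by simp
  show "\<psi> (lower_unip c) (0, y) = (0, y)"
    using intertwine[of "(fst u', 0)"] u' by (simp add: upper_unip_def)
qed

text \<open>The decomposition \<open>weyl_mat b = upper_unip b \<cdot> lower_unip (- 1 / b) \<cdot> upper_unip b\<close>
  together with the antidiagonal shape of \<open>\<psi> (weyl_mat b)\<close> pins down the one unknown entry
  of \<open>\<psi> (lower_unip (- 1 / b))\<close>.\<close>

lemma SL2_embedding_image_lower_unip:
  fixes \<psi> :: "'a::field mat \<Rightarrow> ('a \<times> 'a \<Rightarrow> 'a \<times> 'a)" and a :: 'a
  assumes emb: "SL2_embedding \<psi>" and U: "\<psi> ` unipotent = nat_map ` unipotent"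
    and T: "nat_map ` torus \<subseteq> \<psi> ` torus" and a: "a \<noteq> 0" "a + 1 \<noteq> 0" "a * a + a + 1 \<noteq> 0"
  shows "nat_map (lower_unip c) \<in> \<psi> ` carrier SL2"
proof (cases "c = 0")
  case True
  then have "nat_map (lower_unip c) = \<psi> (1,0,0,1)"
    by (simp add: SL2_embedding_one[OF emb] nat_map_one lower_unip_def)
  then show ?thesis by (simp add: rev_image_eqI)
next
  case False
  then have "- inverse c \<noteq> 0" by simp
  then obtain b where "b \<noteq> 0" and b: "\<psi> (upper_unip b) = nat_map (upper_unip (- inverse c))"
    by (rule SL2_embedding_upper_unip_preimage[OF emb U])
  define g where "g = \<psi> (lower_unip (- inverse b))"
  have "\<psi> (weyl_mat b) = \<psi> (upper_unip b \<cdot> lower_unip (- inverse b) \<cdot> upper_unip b)"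
    using \<open>b \<noteq> 0\<close> by (simp add: weyl_mat_def upper_unip_def lower_unip_def)
  also have "\<dots> = nat_map (upper_unip (- inverse c)) \<circ> g \<circ> nat_map (upper_unip (- inverse c))"
    using b SL2_embedding_mult[OF emb SL2_mult_closed[OF upper_unip_closed lower_unip_closed]
        upper_unip_closed] SL2_embedding_mult[OF emb upper_unip_closed lower_unip_closed]
    by (simp add: g_def del: SL2_mult_eq)
  finally have weyl: "\<psi> (weyl_mat b) v = nat_map (upper_unip (- inverse c)) (g (nat_map (upper_unip (- inverse c)) v))"
    for v by simp
  have g_x: "g (x, 0) = (x, c * x)" for x
  proof -
    have fst_g: "fst (g (x, 0)) = x"
      unfolding g_def by (rule SL2_embedding_lower_unip_shape(1)[OF emb U T a])
    have "fst (\<psi> (weyl_mat b) (x, 0)) = 0"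
      by (rule SL2_embedding_weyl_mat_antidiagonal(1)[OF emb T a \<open>b \<noteq> 0\<close>])
    then have "x - inverse c * snd (g (x, 0)) = 0"
      using weyl[of "(x, 0)"] fst_g by (cases "g (x, 0)") (simp add: upper_unip_def)
    then have "snd (g (x, 0)) = c * x" using False by (simp add: field_simps)
    then show ?thesis using fst_g by (metis prod.collapse)
  qed
  have "g = nat_map (lower_unip c)"
  proof
    fix v :: "'a \<times> 'a"
    obtain x y where v: "v = (x, y)" by (cases v)
    have "g (0, y) = (0, y)"
      unfolding g_def by (rule SL2_embedding_lower_unip_shape(2)[OF emb U T a])
    then show "g v = nat_map (lower_unip c) v"
      using SL2_embedding_split_axes[OF emb lower_unip_closed, of _ x y] g_x[of x]
      by (simp add: v g_def lower_unip_def)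
  qed
  then have "nat_map (lower_unip c) = \<psi> (lower_unip (- inverse b))" unfolding g_def by (rule sym)
  then show ?thesis by (rule rev_image_eqI[OF lower_unip_closed])
qed

lemma SL2_embedding_image_eq_natG_if_borel:
  fixes \<psi> :: "'a::{finite,field} mat \<Rightarrow> ('a \<times> 'a \<Rightarrow> 'a \<times> 'a)" and p m :: nat
  assumes emb: "SL2_embedding \<psi>" and Bor: "nat_map ` borel \<subseteq> \<psi> ` carrier SL2"
    and p: "prime p" "odd p" and q: "card (UNIV :: 'a set) = p ^ m" and m: "m \<ge> 1"
  shows "\<psi> ` carrier SL2 = natG"
proof (cases "card (UNIV :: 'a set) = 3")
  case True
  then show ?thesis by (rule SL2_embedding_image_eq_natG_card3[OF emb])
next
  case False
  then have q5: "card (UNIV :: 'a set) \<ge> 5" using odd_prime_power_ge_5[OF p m] q by simp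
  then obtain a :: 'a where a: "a \<noteq> 0" "a + 1 \<noteq> 0" "a * a + a + 1 \<noteq> 0"
    using exists_nonroot_of_cyclotomic_3 by blast
  have "card (UNIV :: 'a set) \<ge> 4" using q5 by simp
  then obtain a0 :: 'a where a0: "a0 \<noteq> 0" "a0 * a0 \<noteq> 1"
    using exists_nonzero_square_ne_1 by blast
  have U: "nat_map ` unipotent \<subseteq> \<psi> ` carrier SL2"
    by (rule subset_trans[OF image_mono[OF unipotent_subset_borel] Bor])
  then obtain k1 where k1: "k1 \<in> carrier SL2" "\<psi> ` conj_mat k1 ` unipotent = nat_map ` unipotent"
    using SL2_embedding_conj_unipotent[OF emb _ p(1) q m] by blast
  define \<psi>1 where "\<psi>1 = \<psi> \<circ> conj_mat k1"
  have emb1: "SL2_embedding \<psi>1" and image1: "\<psi>1 ` carrier SL2 = \<psi> ` carrier SL2"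
    unfolding \<psi>1_def using SL2_embedding_comp_conj_mat[OF emb k1(1)] by simp_all
  have U1: "\<psi>1 ` unipotent = nat_map ` unipotent" using k1(2) by (simp add: \<psi>1_def image_comp)
  obtain k2 where k2: "k2 \<in> carrier SL2" "\<psi>1 ` conj_mat k2 ` unipotent = nat_map ` unipotent"
    "nat_map ` torus \<subseteq> \<psi>1 ` conj_mat k2 ` torus"
    using SL2_embedding_conj_torus[OF emb1 U1 _ a0] Bor image1 by metis
  define \<psi>2 where "\<psi>2 = \<psi>1 \<circ> conj_mat k2"
  have emb2: "SL2_embedding \<psi>2" and image2: "\<psi>2 ` carrier SL2 = \<psi>1 ` carrier SL2"
    unfolding \<psi>2_def using SL2_embedding_comp_conj_mat[OF emb1 k2(1)] by simp_all
  have "nat_map (lower_unip c) \<in> \<psi> ` carrier SL2" for c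
    using SL2_embedding_image_lower_unip[OF emb2 _ _ a] k2(2,3) image2 image1
    by (simp add: \<psi>2_def image_comp)
  moreover have "nat_map (upper_unip b) \<in> \<psi> ` carrier SL2" for b
    using U by (auto simp: unipotent_def)
  ultimately show ?thesis using SL2_embedding_image_eq_natG_if_unipotents[OF emb] by blast
qed

lemma SL2_embedding_image_eq_natG_if_conj_borel:
  fixes \<psi> :: "'a::{finite,field} mat \<Rightarrow> ('a \<times> 'a \<Rightarrow> 'a \<times> 'a)" and p m :: nat
  assumes emb: "SL2_embedding \<psi>" and h: "h \<in> carrier SL2"
    and Bor: "nat_map ` conj_mat h ` borel \<subseteq> \<psi> ` carrier SL2"
    and p: "prime p" "odd p" and q: "card (UNIV :: 'a set) = p ^ m" and m: "m \<ge> 1"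
  shows "\<psi> ` carrier SL2 = natG"
proof -
  define \<psi>' where "\<psi>' = (\<lambda>A. nat_map (adj_mat h) \<circ> \<psi> A \<circ> nat_map h)"
  have emb': "SL2_embedding \<psi>'"
    using SL2_embedding_conj_GLV[OF emb nat_map_closed[OF h]]
    by (simp add: \<psi>'_def GLV_inv_nat_map[OF h])
  have "nat_map ` borel \<subseteq> \<psi>' ` carrier SL2"
  proof
    fix f assume "f \<in> nat_map ` (borel :: 'a mat set)"
    then obtain B where B: "f = nat_map B" "B \<in> borel" by (rule imageE)
    have "nat_map (conj_mat h B) \<in> \<psi> ` carrier SL2" using subsetD[OF Bor imageI[OF imageI[OF B(2)]]] .
    then obtain A where A: "nat_map (conj_mat h B) = \<psi> A" "A \<in> carrier SL2" by (rule imageE)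
    have "f = nat_map (conj_mat (adj_mat h) (conj_mat h B))"
      by (simp only: B(1) conj_mat_adj_mat(1)[OF h])
    also have "\<dots> = nat_map (adj_mat h) \<circ> nat_map (conj_mat h B) \<circ> nat_map h"
      by (simp only: conj_mat_def adj_mat_adj_mat nat_map_mult comp_assoc)
    also have "\<dots> = \<psi>' A" by (simp only: A(1) \<psi>'_def)
    finally show "f \<in> \<psi>' ` carrier SL2" by (rule rev_image_eqI[OF A(2)])
  qed
  then have image': "\<psi>' ` carrier SL2 = natG"
    by (rule SL2_embedding_image_eq_natG_if_borel[OF emb' _ p q m])
  have "\<psi> A \<in> natG" if "A \<in> carrier SL2" for A
  proof -
    have "\<psi> A = nat_map h \<circ> \<psi>' A \<circ> nat_map (adj_mat h)"
      by (simp add: \<psi>'_def comp_assoc nat_map_adj_mat_comp_cancel[OF h] nat_map_adj_mat(2)[OF h])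
    moreover have "\<psi>' A \<in> natG" unfolding image'[symmetric] using that by (rule imageI)
    ultimately show ?thesis using natG_conj_closed[OF h] by (simp only:)
  qed
  then have "\<psi> ` carrier SL2 \<subseteq> natG" by (rule image_subsetI)
  then show ?thesis
    using card_SL2_embedding_image[OF emb] by (intro card_subset_eq) (simp_all add: natG_def)
qed

theorem lemma5p17:
  fixes p m :: nat
    and S L :: "('a::{finite,field} \<times> 'a \<Rightarrow> 'a \<times> 'a) set"
  assumes "prime p" and "odd p" and "m \<ge> 1"
    and "card (UNIV :: 'a set) = p ^ m"
    and "is_sylow p natG S"
    and "subgroup L GLV"
    and "GLV\<lparr>carrier := L\<rparr> \<cong> (SL2 :: ('a \<times> 'a \<times> 'a \<times> 'a) monoid)"
    and "normalizer_in natG S \<subset> L"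
  shows "L = natG"
proof -
  obtain \<psi> :: "'a mat \<Rightarrow> ('a \<times> 'a \<Rightarrow> 'a \<times> 'a)"
    where "\<psi> \<in> hom SL2 GLV" "inj_on \<psi> (carrier SL2)" and L: "\<psi> ` carrier SL2 = L"
    using group.subgroup_iso_imp_embedding[OF group_GLV assms(6,7) group_SL2] by blast
  then have emb: "SL2_embedding \<psi>" by (simp add: SL2_embedding_def)
  obtain h where h: "h \<in> carrier SL2" and S: "S = nat_map ` conj_mat h ` unipotent"
    using sylow_natG_conj_unipotent[OF assms(1,4,3,5)] by blast
  have "nat_map ` conj_mat h ` borel \<subseteq> L"
    using conj_borel_subset_normalizer[OF h] assms(8) unfolding S by blast
  then show "L = natG"
    using SL2_embedding_image_eq_natG_if_conj_borel[OF emb h _ assms(1,2,4,3)] L by simp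
qed

end
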